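(* Let $S$ be a square-free semigroup, $D$ a division ring, $(\alpha,\xi)\in Z^2(S,D^* )$ a normal 2-cocycle and $R=D^{\alpha}_{\xi}S$. Then the map $\Lambda: H^1_{(\alpha,\xi)}(S,D^* )\to\mathrm{Out}\,R$ given by $B^1_{(\alpha,\xi)}(S,D^* )\,(\mu,\eta)\mapsto(\mathrm{Inn}\,R)\,\sigma_{\mu\eta}$ for $(\mu,\eta)\in Z^1_{(\alpha,\xi)}(S,D^* )$ is a monomorphism (injective group homomorphism).
   Context: $D$ is a division ring, $D^*$ its group of units, $\mathrm{Aut}(D)$ its ring automorphism group, $\rho_d(x)=dxd^{-1}$, $1_D$ the identity of $\mathrm{Aut}(D)$. A square-free semigroup is a semigroup $S$ (product $s\cdot t$) with zero $\theta$ and a finite set $E\subseteq S$ of nonzero pairwise orthogonal idempotents with $S=\bigcup_{e,f\in E}e\cdot S\cdot f$ and $|e\cdot S\cdot f\setminus\{\theta\}|\le 1$; $S^*=S\setminus\{\theta\}$ and each $s\in S^*$ equals $e\cdot s\cdot f$ for unique $e,f\in E$. $S^{<0>}=E$, $S^{<n>}=\{(s_1,\dots,s_n)\in S^n:s_1\cdots s_n\ne\theta\}$, $F^n(S,G)$ the group of functions $S^{<n>}\to G$; $\alpha_s=\alpha(s)$, $\mu_e=\mu(e)$. A 2-cocycle is $(\alpha,\xi)\in F^1(S,\mathrm{Aut}(D))\times F^2(S,D^* )$ with $\alpha_s(\xi(t,u))\xi(s,t\cdot u)=\xi(s,t)\xi(s\cdot t,u)$ on $S^{<3>}$ and $\alpha_s\circ\alpha_t=\rho_{\xi(s,t)}\circ\alpha_{s\cdot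 t}$ on $S^{<2>}$; $Z^2(S,D^* )$ is their set; normal means $\alpha_e=1_D$, $\xi(e,e)=1$ for $e\in E$. $D^{\alpha}_{\xi}S$ is the ring which is the left $D$-vector space with basis $S^*$, multiplication extended by distributivity from $(d_1s)(d_2t)=d_1\alpha_s(d_2)\xi(s,t)(s\cdot t)$ if $s\cdot t\ne\theta$, $0$ otherwise. $\mathrm{Aut}\,R$ is the ring automorphism group, $\mathrm{Inn}\,R$ the normal subgroup of conjugations $x\mapsto rxr^{-1}$ by units $r$, $\mathrm{Out}\,R=\mathrm{Aut}\,R/\mathrm{Inn}\,R$. $Z^1_{(\alpha,\xi)}(S,D^* )$ is the subgroup of $F^0(S,\mathrm{Aut}(D))\ltimes F^1(S,D^* )$ of pairs $(\mu,\eta)$ with $\mu_e\circ\alpha_s\circ\mu_f^{-1}=\rho_{\eta(s)}\circ\alpha_s$ for all $s=e\cdot s\cdot f\in S^*$ and $\mu_e(\xi(s,t))=\eta(s)\alpha_s(\eta(t))\xi(s,t)\eta(s\cdot t)^{-1}$ for all $(s,t)\in S^{<2>}$ with $s=e\cdot s$. $B^1_{(\alpha,\xi)}(S,D^* )$ is the normal subgroup of $Z^1_{(\alpha,\xi)}(S,D^* )$ consisting of the pairs $(\mu,\eta)$ for which there is $\epsilon\in F^0(S,D^* )$ with $\mu_e=\rho_{\epsilon(e)}$ for all $e\in E$ and $\eta(s)=\epsilon(e)\alpha_s(\epsilon(f)^{-1})$ for all $s=e\cdot s\cdot f\in S^*$. $H^1_{(\alpha,\xi)}(S,D^* )=Z^1_{(\alpha,\xi)}(S,D^*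 )/B^1_{(\alpha,\xi)}(S,D^* )$. For $(\mu,\eta)\in Z^1_{(\alpha,\xi)}(S,D^* )$, $\sigma_{\mu\eta}:R\to R$ is the additive map with $\sigma_{\mu\eta}(ds)=\mu_e(d)\eta(s)s$ for $d\in D$, $s=e\cdot s\in S^*$; it is a ring automorphism of $R$. *)

theory Defs
  imports "HOL-Algebra.Algebra"
begin

text \<open>The semigroup S is the whole type 's, with product m, zero th and the finite
set E of idempotents.\<close>

definition sqfree_sg :: "('s \<Rightarrow> 's \<Rightarrow> 's) \<Rightarrow> 's \<Rightarrow> 's set \<Rightarrow> bool" where
  "sqfree_sg m th E \<longleftrightarrow>
     (\<forall>a b c. m (m a b) c = m a (m b c)) \<and>
     (\<forall>a. m th a = th \<and> m a th = th) \<and>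
     finite E \<and> th \<notin> E \<and>
     (\<forall>e\<in>E. m e e = e) \<and>
     (\<forall>e\<in>E. \<forall>f\<in>E. e \<noteq> f \<longrightarrow> m e f = th) \<and>
     (\<forall>s. \<exists>e\<in>E. \<exists>f\<in>E. \<exists>t. s = m (m e t) f) \<and>
     (\<forall>e\<in>E. \<forall>f\<in>E. \<forall>t t'. m (m e t) f \<noteq> th \<longrightarrow> m (m e t') f \<noteq> th
          \<longrightarrow> m (m e t) f = m (m e t') f)"

definition sg_lft :: "('s \<Rightarrow> 's \<Rightarrow> 's) \<Rightarrow> 's set \<Rightarrow> 's \<Rightarrow> 's" where
  "sg_lft m E s = (THE e. e \<in> E \<and> m e s = s)"

definition sg_rgt :: "('s \<Rightarrow> 's \<Rightarrow> 's) \<Rightarrow> 's set \<Rightarrow> 's \<Rightarrow> 's" where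
  "sg_rgt m E s = (THE f. f \<in> E \<and> m s f = s)"

definition autD :: "('d::division_ring \<Rightarrow> 'd) \<Rightarrow> bool" where
  "autD g \<longleftrightarrow> bij g \<and> (\<forall>x y. g (x + y) = g x + g y) \<and> (\<forall>x y. g (x * y) = g x * g y) \<and> g 1 = 1"

definition rho :: "'d::division_ring \<Rightarrow> 'd \<Rightarrow> 'd" where
  "rho d = (\<lambda>x. d * x * inverse d)"

definition cocycle2 :: "('s \<Rightarrow> 's \<Rightarrow> 's) \<Rightarrow> 's \<Rightarrow> ('s \<Rightarrow> 'd::division_ring \<Rightarrow> 'd) \<Rightarrow> ('s \<Rightarrow> 's \<Rightarrow> 'd) \<Rightarrow> bool" where
  "cocycle2 m th \<alpha> \<xi> \<longleftrightarrow>
     (\<forall>s. s \<noteq> th \<longrightarrow> autD (\<alpha> s)) \<and>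
     (\<forall>s t. m s t \<noteq> th \<longrightarrow> \<xi> s t \<noteq> 0) \<and>
     (\<forall>s t u. m (m s t) u \<noteq> th \<longrightarrow> \<alpha> s (\<xi> t u) * \<xi> s (m t u) = \<xi> s t * \<xi> (m s t) u) \<and>
     (\<forall>s t. m s t \<noteq> th \<longrightarrow> \<alpha> s \<circ> \<alpha> t = rho (\<xi> s t) \<circ> \<alpha> (m s t))"

definition normal_cocycle :: "'s set \<Rightarrow> ('s \<Rightarrow> 'd::division_ring \<Rightarrow> 'd) \<Rightarrow> ('s \<Rightarrow> 's \<Rightarrow> 'd) \<Rightarrow> bool" where
  "normal_cocycle E \<alpha> \<xi> \<longleftrightarrow> (\<forall>e\<in>E. \<alpha> e = id \<and> \<xi> e e = 1)"

text \<open>Elements of R are functions S \<Rightarrow> D vanishing at the zero th (coefficients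
with respect to the basis S*; S is finite).\<close>

definition Rmul :: "('s \<Rightarrow> 's \<Rightarrow> 's) \<Rightarrow> 's \<Rightarrow> ('s \<Rightarrow> 'd::division_ring \<Rightarrow> 'd) \<Rightarrow> ('s \<Rightarrow> 's \<Rightarrow> 'd)
     \<Rightarrow> ('s \<Rightarrow> 'd) \<Rightarrow> ('s \<Rightarrow> 'd) \<Rightarrow> ('s \<Rightarrow> 'd)" where
  "Rmul m th \<alpha> \<xi> x y = (\<lambda>u. if u = th then 0 else
      (\<Sum>(s, t)\<in>{(s, t). m s t = u}. x s * \<alpha> s (y t) * \<xi> s t))"

definition Rcarrier :: "'s \<Rightarrow> ('s \<Rightarrow> 'd::zero) set" where
  "Rcarrier th = {x. x th = 0}"

definition Rone :: "('s \<Rightarrow> 's \<Rightarrow> 's) \<Rightarrow> 's \<Rightarrow> ('s \<Rightarrow> 'd::division_ring \<Rightarrow> 'd) \<Rightarrow> ('s \<Rightarrow> 's \<Rightarrow> 'd) \<Rightarrow> ('s \<Rightarrow> 'd)" where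
  "Rone m th \<alpha> \<xi> = (THE u. u \<in> Rcarrier th \<and>
      (\<forall>x\<in>Rcarrier th. Rmul m th \<alpha> \<xi> u x = x \<and> Rmul m th \<alpha> \<xi> x u = x))"

definition Rring :: "('s \<Rightarrow> 's \<Rightarrow> 's) \<Rightarrow> 's \<Rightarrow> ('s \<Rightarrow> 'd::division_ring \<Rightarrow> 'd) \<Rightarrow> ('s \<Rightarrow> 's \<Rightarrow> 'd) \<Rightarrow> ('s \<Rightarrow> 'd) ring" where
  "Rring m th \<alpha> \<xi> = \<lparr>carrier = Rcarrier th, monoid.mult = Rmul m th \<alpha> \<xi>, monoid.one = Rone m th \<alpha> \<xi>,
      ring.zero = (\<lambda>_. 0), ring.add = (\<lambda>x y s. x s + y s)\<rparr>"

definition AutR :: "('s \<Rightarrow> 'd) ring \<Rightarrow> (('s \<Rightarrow> 'd) \<Rightarrow> ('s \<Rightarrow> 'd)) monoid" where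
  "AutR R = (BijGroup (carrier R)) \<lparr>carrier := {g \<in> Bij (carrier R). g \<in> ring_iso R R}\<rparr>"

definition InnR :: "('s \<Rightarrow> 'd) ring \<Rightarrow> (('s \<Rightarrow> 'd) \<Rightarrow> ('s \<Rightarrow> 'd)) set" where
  "InnR R = {restrict (\<lambda>x. r \<otimes>\<^bsub>R\<^esub> x \<otimes>\<^bsub>R\<^esub> inv\<^bsub>R\<^esub> r) (carrier R) | r. r \<in> Units R}"

text \<open>Elements of F^0(S,Aut D) x F^1(S,D^*) are pairs (mu, eta) with mu e = id for
e outside E and eta th = 1 (canonical values outside the domains).\<close>

definition Z1set :: "('s \<Rightarrow> 's \<Rightarrow> 's) \<Rightarrow> 's \<Rightarrow> 's set \<Rightarrow> ('s \<Rightarrow> 'd::division_ring \<Rightarrow> 'd) \<Rightarrow> ('s \<Rightarrow> 's \<Rightarrow> 'd)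
    \<Rightarrow> (('s \<Rightarrow> 'd \<Rightarrow> 'd) \<times> ('s \<Rightarrow> 'd)) set" where
  "Z1set m th E \<alpha> \<xi> = {(\<mu>, \<eta>).
      (\<forall>e\<in>E. autD (\<mu> e)) \<and> (\<forall>e. e \<notin> E \<longrightarrow> \<mu> e = id) \<and>
      (\<forall>s. s \<noteq> th \<longrightarrow> \<eta> s \<noteq> 0) \<and> \<eta> th = 1 \<and>
      (\<forall>s. s \<noteq> th \<longrightarrow> \<mu> (sg_lft m E s) \<circ> \<alpha> s \<circ> inv_into UNIV (\<mu> (sg_rgt m E s)) = rho (\<eta> s) \<circ> \<alpha> s) \<and>
      (\<forall>s t. m s t \<noteq> th \<longrightarrow>
         \<mu> (sg_lft m E s) (\<xi> s t) = \<eta> s * \<alpha> s (\<eta> t) * \<xi> s t * inverse (\<eta> (m s t)))}"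

text \<open>Semidirect product multiplication (the one making sigma a homomorphism).\<close>
definition Z1grp :: "('s \<Rightarrow> 's \<Rightarrow> 's) \<Rightarrow> 's \<Rightarrow> 's set \<Rightarrow> ('s \<Rightarrow> 'd::division_ring \<Rightarrow> 'd) \<Rightarrow> ('s \<Rightarrow> 's \<Rightarrow> 'd)
    \<Rightarrow> (('s \<Rightarrow> 'd \<Rightarrow> 'd) \<times> ('s \<Rightarrow> 'd)) monoid" where
  "Z1grp m th E \<alpha> \<xi> = \<lparr>carrier = Z1set m th E \<alpha> \<xi>,
      monoid.mult = (\<lambda>(\<mu>, \<eta>) (\<mu>', \<eta>'). (\<lambda>e. \<mu> e \<circ> \<mu>' e,
                 \<lambda>s. if s = th then 1 else \<mu> (sg_lft m E s) (\<eta>' s) * \<eta> s)),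
      monoid.one = (\<lambda>e. id, \<lambda>s. 1)\<rparr>"

definition B1set :: "('s \<Rightarrow> 's \<Rightarrow> 's) \<Rightarrow> 's \<Rightarrow> 's set \<Rightarrow> ('s \<Rightarrow> 'd::division_ring \<Rightarrow> 'd) \<Rightarrow> ('s \<Rightarrow> 's \<Rightarrow> 'd)
    \<Rightarrow> (('s \<Rightarrow> 'd \<Rightarrow> 'd) \<times> ('s \<Rightarrow> 'd)) set" where
  "B1set m th E \<alpha> \<xi> = {(\<mu>, \<eta>) \<in> Z1set m th E \<alpha> \<xi>. \<exists>\<epsilon>.
      (\<forall>e\<in>E. \<epsilon> e \<noteq> 0 \<and> \<mu> e = rho (\<epsilon> e)) \<and>
      (\<forall>s. s \<noteq> th \<longrightarrow> \<eta> s = \<epsilon> (sg_lft m E s) * \<alpha> s (inverse (\<epsilon> (sg_rgt m E s))))}"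

definition sigma :: "('s \<Rightarrow> 's \<Rightarrow> 's) \<Rightarrow> 's \<Rightarrow> 's set \<Rightarrow> ('s \<Rightarrow> 'd::division_ring \<Rightarrow> 'd) \<Rightarrow> ('s \<Rightarrow> 'd)
    \<Rightarrow> ('s \<Rightarrow> 'd) \<Rightarrow> ('s \<Rightarrow> 'd)" where
  "sigma m th E \<mu> \<eta> = restrict (\<lambda>x s. if s = th then 0 else \<mu> (sg_lft m E s) (x s) * \<eta> s) (Rcarrier th)"

definition Lambda :: "('s \<Rightarrow> 's \<Rightarrow> 's) \<Rightarrow> 's \<Rightarrow> 's set \<Rightarrow> ('s \<Rightarrow> 'd::division_ring \<Rightarrow> 'd) \<Rightarrow> ('s \<Rightarrow> 's \<Rightarrow> 'd)
    \<Rightarrow> (('s \<Rightarrow> 'd \<Rightarrow> 'd) \<times> ('s \<Rightarrow> 'd)) set \<Rightarrow> (('s \<Rightarrow> 'd) \<Rightarrow> ('s \<Rightarrow> 'd)) set" where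
  "Lambda m th E \<alpha> \<xi> C = (let z = (SOME z. z \<in> C) in
      InnR (Rring m th \<alpha> \<xi>) #>\<^bsub>AutR (Rring m th \<alpha> \<xi>)\<^esub> sigma m th E (fst z) (snd z))"

end

theory Submission
  imports Defs
begin

text \<open>Each \<open>(\<mu>, \<eta>) \<in> Z\<^sup>1\<close> acts on \<open>R = D\<^sup>\<alpha>\<^sub>\<xi>S\<close> by the semilinear map \<open>\<sigma>\<^sub>\<mu>\<^sub>\<eta>\<close>; the 1-cocycle
  identities are exactly what makes it multiplicative, and \<open>\<sigma>\<close> turns the product of \<open>Z\<^sup>1\<close> into
  composition. The coboundary of \<open>\<epsilon>\<close> acts as conjugation by the diagonal unit \<open>\<Sum>\<^sub>e \<epsilon>(e) e\<close>, so
  \<open>\<sigma>\<close> induces a homomorphism \<open>H\<^sup>1 \<rightarrow> Out R\<close>. For injectivity: if \<open>\<sigma>\<^sub>\<mu>\<^sub>\<eta>\<close> and \<open>\<sigma>\<^sub>\<mu>\<^sub>'\<^sub>\<eta>\<^sub>'\<close>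
  differ by conjugation with a unit \<open>r\<close>, then, as both fix the idempotents \<open>e \<in> E\<close>, \<open>r\<close>
  commutes with them; square-freeness forces such an \<open>r\<close> to be diagonal, so the two cocycles
  differ by a coboundary.\<close>

section \<open>Automorphisms of a division ring\<close>

lemma autD_add: "autD g \<Longrightarrow> g (x + y) = g x + g y"
  by (simp add: autD_def)

lemma autD_mult: "autD g \<Longrightarrow> g (x * y) = g x * g y"
  by (simp add: autD_def)

lemma autD_one: "autD g \<Longrightarrow> g 1 = 1"
  by (simp add: autD_def)

lemma autD_zero: "autD g \<Longrightarrow> g 0 = 0"
  using autD_add[of g 0 0] by simp

lemma autD_inv_into_apply: "autD g \<Longrightarrow> inv_into UNIV g (g x) = x"
  by (simp add: autD_def bij_is_inj)

lemma autD_apply_inv_into: "autD g \<Longrightarrow> g (inv_into UNIV g x) = x"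
  by (simp add: autD_def bij_is_surj f_inv_into_f)

lemma autD_eq_0_iff: "autD g \<Longrightarrow> g x = 0 \<longleftrightarrow> x = 0"
  by (metis autD_inv_into_apply autD_zero)

lemma autD_inverse: "autD g \<Longrightarrow> g (inverse x) = inverse (g x)"
proof (cases "x = 0")
  case False
  assume g: "autD g"
  have "g x * g (inverse x) = 1"
    using g False by (metis autD_mult autD_one right_inverse)
  then show ?thesis by (metis inverse_unique)
qed (simp add: autD_zero)

lemma autD_sum: "autD g \<Longrightarrow> g (sum f A) = (\<Sum>a\<in>A. g (f a))"
  by (induction A rule: infinite_finite_induct) (simp_all add: autD_zero autD_add)

lemma autD_comp: "autD f \<Longrightarrow> autD g \<Longrightarrow> autD (f \<circ> g)"
  by (simp add: autD_def bij_comp)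

lemma rho_rho: "a \<noteq> 0 \<Longrightarrow> b \<noteq> 0 \<Longrightarrow> rho a (rho b x) = rho (a * b) x"
  by (simp add: rho_def mult.assoc nonzero_inverse_mult_distrib)

lemma rho_1: "rho 1 = id"
  by (simp add: rho_def fun_eq_iff)

lemma rho_inverse_rho: "a \<noteq> 0 \<Longrightarrow> rho (inverse a) (rho a x) = x"
  by (simp add: rho_rho rho_1)

lemma rho_rho_inverse: "a \<noteq> 0 \<Longrightarrow> rho a (rho (inverse a) x) = x"
  by (simp add: rho_rho rho_1)

lemma autD_rho: "a \<noteq> 0 \<Longrightarrow> autD (rho a)"
  unfolding autD_def
proof (intro conjI allI)
  assume a: "a \<noteq> 0"
  show "bij (rho a)"
    by (rule o_bij[where g = "rho (inverse a)"]) (auto simp: fun_eq_iff rho_inverse_rho rho_rho_inverse a)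
  fix x y
  show "rho a (x * y) = rho a x * rho a y"
    using a by (simp add: rho_def mult.assoc) (simp add: mult.assoc[symmetric])
qed (simp_all add: rho_def algebra_simps)

lemma inv_into_rho: "a \<noteq> 0 \<Longrightarrow> inv_into UNIV (rho a) = rho (inverse a)"
  by (rule inv_equality) (simp_all add: rho_inverse_rho rho_rho_inverse)

lemma inverse_mult_cancel_left: "(a::'d::division_ring) \<noteq> 0 \<Longrightarrow> inverse a * (a * x) = x"
  by (simp add: mult.assoc[symmetric])

lemma mult_inverse_cancel_left: "(a::'d::division_ring) \<noteq> 0 \<Longrightarrow> a * (inverse a * x) = x"
  by (simp add: mult.assoc[symmetric])

section \<open>Inner automorphisms of a ring\<close>

definition inn :: "('a, 'b) ring_scheme \<Rightarrow> 'a \<Rightarrow> 'a \<Rightarrow> 'a" where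
  "inn R r = restrict (\<lambda>x. r \<otimes>\<^bsub>R\<^esub> x \<otimes>\<^bsub>R\<^esub> inv\<^bsub>R\<^esub> r) (carrier R)"

lemma InnR_eq_image: "InnR R = inn R ` Units R"
  unfolding InnR_def inn_def by auto

lemma AutR_mult:
  "f \<in> Bij (carrier R) \<Longrightarrow> g \<in> Bij (carrier R) \<Longrightarrow> f \<otimes>\<^bsub>AutR R\<^esub> g = compose (carrier R) f g"
  by (simp add: AutR_def BijGroup_def)

context ring
begin

lemma inn_apply: "x \<in> carrier R \<Longrightarrow> inn R r x = r \<otimes> x \<otimes> inv r"
  by (simp add: inn_def)

lemma inn_closed: "r \<in> Units R \<Longrightarrow> x \<in> carrier R \<Longrightarrow> inn R r x \<in> carrier R"
  by (simp add: inn_apply Units_closed)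

lemma inv_mult_Units: "q \<in> Units R \<Longrightarrow> r \<in> Units R \<Longrightarrow> inv (q \<otimes> r) = inv r \<otimes> inv q"
  using group.inv_mult_group[OF units_group, of q r] by (simp add: units_of_mult units_of_inv units_of_carrier)

lemma compose_inn_inn:
  assumes "q \<in> Units R" "r \<in> Units R"
  shows "compose (carrier R) (inn R q) (inn R r) = inn R (q \<otimes> r)"
proof
  fix x
  show "compose (carrier R) (inn R q) (inn R r) x = inn R (q \<otimes> r) x"
    using assms inn_closed[OF assms(2)]
    by (cases "x \<in> carrier R") (simp_all add: compose_def inn_def inv_mult_Units m_assoc Units_closed)
qed

lemma inn_one: "inn R \<one> = (\<lambda>x\<in>carrier R. x)"
  unfolding inn_def by (rule restrict_ext) simp

lemma inn_inv_inn: "r \<in> Units R \<Longrightarrow> x \<in> carrier R \<Longrightarrow> inn R (inv r) (inn R r x) = x"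
  using compose_inn_inn[of "inv r" r] by (simp add: compose_def inn_one fun_eq_iff) meson

lemma inn_Bij: "r \<in> Units R \<Longrightarrow> inn R r \<in> Bij (carrier R)"
proof -
  assume r: "r \<in> Units R"
  then have "bij_betw (inn R r) (carrier R) (carrier R)"
    using inn_inv_inn[of "inv r"]
    by (intro bij_betwI[where g = "inn R (inv r)"]) (auto simp: inn_closed inn_inv_inn)
  then show ?thesis by (simp add: Bij_def inn_def)
qed

lemma inn_fixed_commute:
  assumes r: "r \<in> Units R" and x: "x \<in> carrier R" and fixed: "inn R r x = x"
  shows "x \<otimes> r = r \<otimes> x"
proof -
  have rc: "r \<in> carrier R" "inv r \<in> carrier R" using r by auto
  have "x \<otimes> r = r \<otimes> x \<otimes> inv r \<otimes> r"
    using fixed x by (simp add: inn_apply)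
  also have "\<dots> = r \<otimes> x"
    using r rc x by (simp add: m_assoc)
  finally show ?thesis .
qed

lemma ring_hom_Units:
  assumes f: "f \<in> ring_hom R R" and r: "r \<in> Units R"
  shows "f r \<in> Units R" and "f (inv r) = inv (f r)"
proof -
  have rc: "r \<in> carrier R" "inv r \<in> carrier R" using r by auto
  have fc: "f r \<in> carrier R" "f (inv r) \<in> carrier R" using rc f by (auto simp: ring_hom_closed)
  have 1: "f r \<otimes> f (inv r) = \<one>" and 2: "f (inv r) \<otimes> f r = \<one>"
    using f rc r by (metis ring_hom_mult ring_hom_one Units_r_inv Units_l_inv)+
  show "f r \<in> Units R" using 1 2 fc unfolding Units_def by auto
  show "f (inv r) = inv (f r)" by (rule inv_unique'[OF fc 1 2])
qed

lemma compose_ring_hom_inn: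
  assumes f: "f \<in> ring_hom R R" and r: "r \<in> Units R"
  shows "compose (carrier R) f (inn R r) = compose (carrier R) (inn R (f r)) f"
proof
  fix x
  show "compose (carrier R) f (inn R r) x = compose (carrier R) (inn R (f r)) f x"
    using f r ring_hom_Units[OF f r] inn_closed[OF r]
    by (cases "x \<in> carrier R") (simp_all add: compose_def inn_apply ring_hom_mult ring_hom_closed Units_closed)
qed

end

context
  fixes R :: "('x \<Rightarrow> 'y) ring" (structure)
  assumes ring_R: "ring R"
begin

interpretation ring R by (rule ring_R)

abbreviation conj_comp :: "('x \<Rightarrow> 'y) \<Rightarrow> (('x \<Rightarrow> 'y) \<Rightarrow> ('x \<Rightarrow> 'y)) \<Rightarrow> ('x \<Rightarrow> 'y) \<Rightarrow> ('x \<Rightarrow> 'y)"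
  where "conj_comp r f \<equiv> compose (carrier R) (inn R r) f"

lemma rcoset_InnR: "f \<in> Bij (carrier R) \<Longrightarrow> InnR R #>\<^bsub>AutR R\<^esub> f = (\<lambda>r. conj_comp r f) ` Units R"
  unfolding r_coset_def InnR_eq_image by (auto simp: AutR_mult inn_Bij)

lemma conj_comp_conj_comp:
  "f \<in> Bij (carrier R) \<Longrightarrow> q \<in> Units R \<Longrightarrow> r \<in> Units R \<Longrightarrow> conj_comp r (conj_comp q f) = conj_comp (r \<otimes> q) f"
  by (simp add: compose_assoc[OF Bij_imp_funcset] compose_inn_inn)

lemma Units_mult_right_image: "q \<in> Units R \<Longrightarrow> (\<lambda>r. r \<otimes> q) ` Units R = Units R"
proof (intro equalityI subsetI)
  fix r assume q: "q \<in> Units R" and r: "r \<in> Units R"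
  have "r = r \<otimes> inv q \<otimes> q"
    using q r by (simp add: m_assoc Units_closed)
  moreover have "r \<otimes> inv q \<in> Units R"
    using q r by (simp add: Units_m_closed)
  ultimately show "r \<in> (\<lambda>r. r \<otimes> q) ` Units R" by (rule image_eqI)
next
  fix r assume "q \<in> Units R" "r \<in> (\<lambda>r. r \<otimes> q) ` Units R"
  then show "r \<in> Units R" by (auto simp: Units_m_closed)
qed

lemma rcoset_InnR_conj_comp:
  assumes f: "f \<in> Bij (carrier R)" and q: "q \<in> Units R"
  shows "InnR R #>\<^bsub>AutR R\<^esub> conj_comp q f = InnR R #>\<^bsub>AutR R\<^esub> f"
proof -
  have "(\<lambda>r. conj_comp r (conj_comp q f)) ` Units R = (\<lambda>r. conj_comp (r \<otimes> q) f) ` Units R"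
    using f q by (intro image_cong) (simp_all add: conj_comp_conj_comp)
  also have "\<dots> = (\<lambda>r. conj_comp r f) ` Units R"
    by (simp only: image_image[symmetric, of "\<lambda>r. conj_comp r f" "\<lambda>r. r \<otimes> q"] Units_mult_right_image[OF q])
  finally show ?thesis
    using f q by (simp add: rcoset_InnR compose_Bij inn_Bij)
qed

lemma conj_comp_compose_conj_comp:
  assumes f: "f \<in> Bij (carrier R)" "f \<in> ring_hom R R" and g: "g \<in> Bij (carrier R)"
    and a: "a \<in> Units R" and b: "b \<in> Units R"
  shows "compose (carrier R) (conj_comp a f) (conj_comp b g) = conj_comp (a \<otimes> f b) (compose (carrier R) f g)"
proof -
  have g': "g \<in> carrier R \<rightarrow> carrier R" using g by (rule Bij_imp_funcset)
  have "compose (carrier R) (conj_comp a f) (conj_comp b g)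
      = conj_comp a (compose (carrier R) f (conj_comp b g))"
    by (rule compose_assoc[symmetric, OF Bij_imp_funcset[OF compose_Bij[OF inn_Bij[OF b] g]]])
  also have "compose (carrier R) f (conj_comp b g) = compose (carrier R) (compose (carrier R) f (inn R b)) g"
    by (rule compose_assoc[OF g'])
  also have "\<dots> = conj_comp (f b) (compose (carrier R) f g)"
    by (simp add: compose_ring_hom_inn[OF f(2) b] compose_assoc[OF g'])
  also have "conj_comp a \<dots> = conj_comp (a \<otimes> f b) (compose (carrier R) f g)"
    using f g a b by (simp add: conj_comp_conj_comp compose_Bij ring_hom_Units)
  finally show ?thesis .
qed

lemma rcoset_InnR_compose:
  assumes f: "f \<in> Bij (carrier R)" "f \<in> ring_hom R R" and g: "g \<in> Bij (carrier R)"
  shows "(InnR R #>\<^bsub>AutR R\<^esub> f) <#>\<^bsub>AutR R\<^esub> (InnR R #>\<^bsub>AutR R\<^esub> g)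
       = InnR R #>\<^bsub>AutR R\<^esub> compose (carrier R) f g"
proof -
  have prod: "conj_comp a f \<otimes>\<^bsub>AutR R\<^esub> conj_comp b g = conj_comp (a \<otimes> f b) (compose (carrier R) f g)"
    if "a \<in> Units R" "b \<in> Units R" for a b
    using conj_comp_compose_conj_comp[OF f g that] f(1) g that by (simp add: AutR_mult compose_Bij inn_Bij)
  show ?thesis
    unfolding rcoset_InnR[OF f(1)] rcoset_InnR[OF g] rcoset_InnR[OF compose_Bij[OF f(1) g]]
  proof (intro equalityI subsetI)
    fix h assume "h \<in> (\<lambda>r. conj_comp r f) ` Units R <#>\<^bsub>AutR R\<^esub> (\<lambda>r. conj_comp r g) ` Units R"
    then obtain a b where ab: "a \<in> Units R" "b \<in> Units R"
      and h: "h = conj_comp a f \<otimes>\<^bsub>AutR R\<^esub> conj_comp b g"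
      unfolding set_mult_def by auto
    have "a \<otimes> f b \<in> Units R" using ab ring_hom_Units(1)[OF f(2)] by (simp add: Units_m_closed)
    then show "h \<in> (\<lambda>r. conj_comp r (compose (carrier R) f g)) ` Units R"
      unfolding h prod[OF ab] by (rule imageI)
  next
    fix h assume "h \<in> (\<lambda>r. conj_comp r (compose (carrier R) f g)) ` Units R"
    then obtain a where a: "a \<in> Units R" and h: "h = conj_comp a (compose (carrier R) f g)" by auto
    have "h = conj_comp a f \<otimes>\<^bsub>AutR R\<^esub> conj_comp \<one> g"
      using prod[OF a Units_one_closed] a f(2) by (simp add: h ring_hom_one Units_closed)
    then show "h \<in> (\<lambda>r. conj_comp r f) ` Units R <#>\<^bsub>AutR R\<^esub> (\<lambda>r. conj_comp r g) ` Units R"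
      unfolding set_mult_def using a by blast
  qed
qed

lemma rcoset_InnR_self: "f \<in> Bij (carrier R) \<Longrightarrow> f \<in> InnR R #>\<^bsub>AutR R\<^esub> f"
  using Id_compose[OF Bij_imp_funcset Bij_imp_extensional, of f "carrier R"]
  by (auto simp: rcoset_InnR inn_one intro!: image_eqI[where x = \<one>])

end

section \<open>Square-free semigroups\<close>

locale sqfree_semigroup =
  fixes m :: "'s \<Rightarrow> 's \<Rightarrow> 's" and th :: 's and E :: "'s set"
  assumes sqfree: "sqfree_sg m th E"
begin

abbreviation "lft \<equiv> sg_lft m E"
abbreviation "rgt \<equiv> sg_rgt m E"

lemma assoc: "m (m a b) c = m a (m b c)"
  using sqfree by (simp add: sqfree_sg_def)

lemma zero_left [simp]: "m th a = th" and zero_right [simp]: "m a th = th"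
  using sqfree by (simp_all add: sqfree_sg_def)

lemma finite_E: "finite E" and zero_notin_E [simp]: "th \<notin> E"
  using sqfree by (simp_all add: sqfree_sg_def)

lemma idem: "e \<in> E \<Longrightarrow> m e e = e"
  using sqfree by (simp add: sqfree_sg_def)

lemma orth: "e \<in> E \<Longrightarrow> f \<in> E \<Longrightarrow> e \<noteq> f \<Longrightarrow> m e f = th"
  using sqfree by (simp add: sqfree_sg_def)

lemma sqfree_unique:
  "e \<in> E \<Longrightarrow> f \<in> E \<Longrightarrow> m (m e t) f \<noteq> th \<Longrightarrow> m (m e t') f \<noteq> th \<Longrightarrow> m (m e t) f = m (m e t') f"
  using sqfree unfolding sqfree_sg_def by (elim conjE) blast

lemma E_nonzero: "e \<in> E \<Longrightarrow> e \<noteq> th"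
  by auto

lemma mult_nonzero_D: "m s t \<noteq> th \<Longrightarrow> s \<noteq> th \<and> t \<noteq> th"
  by auto

lemma lft_rgt_exist: "\<exists>e\<in>E. \<exists>f\<in>E. m e s = s \<and> m s f = s"
proof -
  obtain e f t where ef: "e \<in> E" "f \<in> E" "s = m (m e t) f"
    using sqfree unfolding sqfree_sg_def by (elim conjE) blast
  then show ?thesis by (metis assoc idem)
qed

lemma lft_unique: "e \<in> E \<Longrightarrow> e' \<in> E \<Longrightarrow> m e s = s \<Longrightarrow> m e' s \<noteq> th \<Longrightarrow> e' = e"
  by (metis assoc orth zero_left)

lemma rgt_unique: "f \<in> E \<Longrightarrow> f' \<in> E \<Longrightarrow> m s f = s \<Longrightarrow> m s f' \<noteq> th \<Longrightarrow> f' = f"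
  by (metis assoc orth zero_right)

lemma lft: "s \<noteq> th \<Longrightarrow> lft s \<in> E \<and> m (lft s) s = s"
  unfolding sg_lft_def by (rule theI') (use lft_rgt_exist lft_unique in metis)

lemma rgt: "s \<noteq> th \<Longrightarrow> rgt s \<in> E \<and> m s (rgt s) = s"
  unfolding sg_rgt_def by (rule theI') (use lft_rgt_exist rgt_unique in metis)

lemma lft_in_E: "s \<noteq> th \<Longrightarrow> lft s \<in> E" and rgt_in_E: "s \<noteq> th \<Longrightarrow> rgt s \<in> E"
  using lft rgt by blast+

lemma E_mult_left: "s \<noteq> th \<Longrightarrow> e \<in> E \<Longrightarrow> m e s = (if e = lft s then s else th)"
  using lft lft_unique by metis

lemma E_mult_right: "s \<noteq> th \<Longrightarrow> f \<in> E \<Longrightarrow> m s f = (if f = rgt s then s else th)"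
  using rgt rgt_unique by metis

lemma E_mult_left_eq: "u \<noteq> th \<Longrightarrow> e \<in> E \<Longrightarrow> m e t = u \<longleftrightarrow> e = lft u \<and> t = u"
  by (cases "t = th") (auto simp: E_mult_left)

lemma E_mult_right_eq: "u \<noteq> th \<Longrightarrow> f \<in> E \<Longrightarrow> m s f = u \<longleftrightarrow> s = u \<and> f = rgt u"
  by (cases "s = th") (auto simp: E_mult_right)

lemma rgt_eq_lft_if_mult_nonzero:
  assumes "m s t \<noteq> th" shows "rgt s = lft t"
proof -
  have s: "s \<noteq> th" and t: "t \<noteq> th" using assms by auto
  have "m s t = m s (m (rgt s) t)" using rgt[OF s] by (simp add: assoc[symmetric])
  then show ?thesis using assms E_mult_left[OF t rgt_in_E[OF s]] by (auto split: if_splits)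
qed

lemma lft_mult:
  assumes "m s t \<noteq> th" shows "lft (m s t) = lft s"
proof -
  have s: "s \<noteq> th" using assms by auto
  have "m (lft s) (m s t) = m s t" using lft[OF s] by (simp add: assoc[symmetric])
  then show ?thesis using E_mult_left[OF assms lft_in_E[OF s]] assms by (auto split: if_splits)
qed

lemma rgt_mult:
  assumes "m s t \<noteq> th" shows "rgt (m s t) = rgt t"
proof -
  have t: "t \<noteq> th" using assms by auto
  have "m (m s t) (rgt t) = m s t" using rgt[OF t] by (simp add: assoc)
  then show ?thesis using E_mult_right[OF assms rgt_in_E[OF t]] assms by (auto split: if_splits)
qed

lemma lft_E [simp]: "e \<in> E \<Longrightarrow> lft e = e"
  using E_mult_left[OF E_nonzero, of e e] idem by (auto split: if_splits)

lemma rgt_E [simp]: "e \<in> E \<Longrightarrow> rgt e = e"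
  using E_mult_right[OF E_nonzero, of e e] idem by (auto split: if_splits)

text \<open>A nonzero element is determined by its idempotents: this is where \<open>|e S f \<setminus> {\<theta>}| \<le> 1\<close> enters.\<close>

lemma eq_if_lft_rgt_eq:
  assumes "s \<noteq> th" "s' \<noteq> th" "lft s = lft s'" "rgt s = rgt s'"
  shows "s = s'"
proof -
  have s: "m (m (lft s) s) (rgt s) = s"
    using lft[OF assms(1)] rgt[OF assms(1)] by simp
  have s': "m (m (lft s) s') (rgt s) = s'"
    unfolding assms(3,4) using lft[OF assms(2)] rgt[OF assms(2)] by simp
  have "m (m (lft s) s) (rgt s) = m (m (lft s) s') (rgt s)"
    by (rule sqfree_unique[OF lft_in_E[OF assms(1)] rgt_in_E[OF assms(1)]]) (simp_all add: s s' assms(1,2))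
  then show ?thesis by (simp only: s s')
qed

lemma in_E_if_lft_eq_rgt:
  assumes s: "s \<noteq> th" and eq: "lft s = rgt s"
  shows "s \<in> E"
proof -
  have e: "lft s \<in> E" using lft_in_E[OF s] .
  have "s = lft s"
    using eq_if_lft_rgt_eq[OF s E_nonzero[OF e]] lft_E[OF e] rgt_E[OF e] eq by argo
  then show ?thesis using e by simp
qed

lemma finite_UNIV_semigroup [simp]: "finite (UNIV :: 's set)"
proof -
  have "inj_on (\<lambda>s. (lft s, rgt s)) (UNIV - {th})"
    by (auto intro!: inj_onI eq_if_lft_rgt_eq)
  moreover have "(\<lambda>s. (lft s, rgt s)) ` (UNIV - {th}) \<subseteq> E \<times> E"
    using lft_in_E rgt_in_E by auto
  ultimately have "finite (UNIV - {th})"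
    using finite_E inj_on_finite by blast
  then show ?thesis by simp
qed

end

section \<open>The twisted semigroup ring\<close>

lemma sum_over_fibres:
  fixes G :: "'a \<Rightarrow> 'b \<Rightarrow> 'c::comm_monoid_add" and f :: "'a \<Rightarrow> 'b \<Rightarrow> 'w"
  assumes "finite (UNIV :: 'w set)"
  shows "(\<Sum>w\<in>UNIV. if P w then (\<Sum>s\<in>A. \<Sum>t\<in>B. if f s t = w then G s t else 0) else 0)
       = (\<Sum>s\<in>A. \<Sum>t\<in>B. if P (f s t) then G s t else 0)"
proof -
  have "(if P w then (\<Sum>s\<in>A. \<Sum>t\<in>B. if f s t = w then G s t else 0) else 0)
      = (\<Sum>s\<in>A. \<Sum>t\<in>B. if f s t = w then (if P w then G s t else 0) else 0)" for w
    by (cases "P w") (simp_all cong: if_cong)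
  then have "(\<Sum>w\<in>UNIV. if P w then (\<Sum>s\<in>A. \<Sum>t\<in>B. if f s t = w then G s t else 0) else 0)
      = (\<Sum>s\<in>A. \<Sum>t\<in>B. \<Sum>w\<in>UNIV. if f s t = w then (if P w then G s t else 0) else 0)"
    by (simp add: sum.swap[of _ UNIV])
  also have "\<dots> = (\<Sum>s\<in>A. \<Sum>t\<in>B. if P (f s t) then G s t else 0)"
    using assms by (simp add: sum.delta)
  finally show ?thesis .
qed

definition diag :: "'s set \<Rightarrow> ('s \<Rightarrow> 'd::zero) \<Rightarrow> 's \<Rightarrow> 'd" where
  "diag E \<epsilon> = (\<lambda>s. if s \<in> E then \<epsilon> s else 0)"

definition nonzero_on :: "'a set \<Rightarrow> ('a \<Rightarrow> 'd::division_ring) set" where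
  "nonzero_on A = {\<epsilon>. \<forall>a\<in>A. \<epsilon> a \<noteq> 0}"

lemma nonzero_on_mult: "\<epsilon> \<in> nonzero_on A \<Longrightarrow> \<epsilon>' \<in> nonzero_on A \<Longrightarrow> (\<lambda>a. \<epsilon> a * \<epsilon>' a) \<in> nonzero_on A"
  and nonzero_on_inverse: "\<epsilon> \<in> nonzero_on A \<Longrightarrow> (\<lambda>a. inverse (\<epsilon> a)) \<in> nonzero_on A"
  and nonzero_on_one: "(\<lambda>a. 1) \<in> nonzero_on A"
  by (simp_all add: nonzero_on_def)

text \<open>The group \<open>F\<^sup>0(S, Aut D) \<ltimes> F\<^sup>1(S, D\<^sup>*)\<close>, in the encoding used by \<open>Z1set\<close>.\<close>

definition cochain_pairs :: "'s \<Rightarrow> 's set \<Rightarrow> (('s \<Rightarrow> 'd::division_ring \<Rightarrow> 'd) \<times> ('s \<Rightarrow> 'd)) set" where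
  "cochain_pairs th E = {(\<mu>, \<eta>). (\<forall>e\<in>E. autD (\<mu> e)) \<and> (\<forall>e. e \<notin> E \<longrightarrow> \<mu> e = id) \<and>
      (\<forall>s. s \<noteq> th \<longrightarrow> \<eta> s \<noteq> 0) \<and> \<eta> th = 1}"

locale twisted_semigroup_ring = sqfree_semigroup m th E
  for m :: "'s \<Rightarrow> 's \<Rightarrow> 's" and th :: 's and E :: "'s set" +
  fixes \<alpha> :: "'s \<Rightarrow> 'd::division_ring \<Rightarrow> 'd" and \<xi> :: "'s \<Rightarrow> 's \<Rightarrow> 'd"
  assumes cocycle: "cocycle2 m th \<alpha> \<xi>" and normal: "normal_cocycle E \<alpha> \<xi>"
begin

lemma autD_alpha: "s \<noteq> th \<Longrightarrow> autD (\<alpha> s)"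
  using cocycle by (simp add: cocycle2_def)

lemma xi_nonzero: "m s t \<noteq> th \<Longrightarrow> \<xi> s t \<noteq> 0"
  using cocycle by (simp add: cocycle2_def)

lemma cocycle_xi: "m (m s t) u \<noteq> th \<Longrightarrow> \<alpha> s (\<xi> t u) * \<xi> s (m t u) = \<xi> s t * \<xi> (m s t) u"
  using cocycle by (simp add: cocycle2_def)

lemma cocycle_alpha: "m s t \<noteq> th \<Longrightarrow> \<alpha> s (\<alpha> t x) = rho (\<xi> s t) (\<alpha> (m s t) x)"
  using cocycle unfolding cocycle2_def by (metis comp_apply)

lemma alpha_E [simp]: "e \<in> E \<Longrightarrow> \<alpha> e = id" and xi_E: "e \<in> E \<Longrightarrow> \<xi> e e = 1"
  using normal by (simp_all add: normal_cocycle_def)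

lemma xi_lft: "s \<noteq> th \<Longrightarrow> \<xi> (lft s) s = 1"
proof -
  assume s: "s \<noteq> th"
  let ?e = "lft s"
  have e: "?e \<in> E" "m ?e s = s" using lft[OF s] by auto
  have "\<xi> ?e s * \<xi> ?e s = 1 * \<xi> ?e s"
    using cocycle_xi[of ?e ?e s] e s by (simp add: idem xi_E)
  then show ?thesis using xi_nonzero[of ?e s] e s by (simp add: mult_right_cancel)
qed

lemma xi_rgt: "s \<noteq> th \<Longrightarrow> \<xi> s (rgt s) = 1"
proof -
  assume s: "s \<noteq> th"
  let ?f = "rgt s"
  have f: "?f \<in> E" "m s ?f = s" using rgt[OF s] by auto
  have "\<xi> s ?f * 1 = \<xi> s ?f * \<xi> s ?f"
    using cocycle_xi[of s ?f ?f] f s by (simp add: idem xi_E autD_one[OF autD_alpha[OF s]])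
  then show ?thesis using xi_nonzero[of s ?f] f s by (simp add: mult_left_cancel)
qed

abbreviation "mul \<equiv> Rmul m th \<alpha> \<xi>"
abbreviation "RR \<equiv> Rring m th \<alpha> \<xi>"

lemma mul_zero_point [simp]: "mul x y th = 0"
  by (simp add: Rmul_def)

lemma mul_eq_sum:
  assumes "u \<noteq> th"
  shows "mul x y u = (\<Sum>s\<in>UNIV. \<Sum>t\<in>UNIV. if m s t = u then x s * \<alpha> s (y t) * \<xi> s t else 0)"
proof -
  have "mul x y u = (\<Sum>p\<in>{p \<in> UNIV. m (fst p) (snd p) = u}. x (fst p) * \<alpha> (fst p) (y (snd p)) * \<xi> (fst p) (snd p))"
    using assms unfolding Rmul_def by (auto intro!: sum.cong simp: case_prod_beta)
  also have "\<dots> = (\<Sum>p\<in>UNIV. if m (fst p) (snd p) = u then x (fst p) * \<alpha> (fst p) (y (snd p)) * \<xi> (fst p) (snd p) else 0)"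
    by (rule sum.inter_filter) (simp add: finite_prod)
  also have "\<dots> = (\<Sum>s\<in>UNIV. \<Sum>t\<in>UNIV. if m s t = u then x s * \<alpha> s (y t) * \<xi> s t else 0)"
    by (simp add: sum.cartesian_product' cong: if_cong flip: UNIV_Times_UNIV)
  finally show ?thesis .
qed

lemma cocycle_triple:
  assumes "m (m s t) u \<noteq> th"
  shows "a * \<alpha> s b * \<xi> s t * \<alpha> (m s t) c * \<xi> (m s t) u = a * \<alpha> s (b * \<alpha> t c * \<xi> t u) * \<xi> s (m t u)"
proof -
  have st: "m s t \<noteq> th" using assms by (metis zero_left)
  then have s: "s \<noteq> th" by auto
  have A: "autD (\<alpha> s)" by (rule autD_alpha[OF s])
  have "a * \<alpha> s (b * \<alpha> t c * \<xi> t u) * \<xi> s (m t u)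
      = a * \<alpha> s b * \<alpha> s (\<alpha> t c) * (\<alpha> s (\<xi> t u) * \<xi> s (m t u))"
    by (simp add: autD_mult[OF A] mult.assoc)
  also have "\<dots> = a * \<alpha> s b * (\<xi> s t * \<alpha> (m s t) c * inverse (\<xi> s t)) * (\<xi> s t * \<xi> (m s t) u)"
    by (simp add: cocycle_xi[OF assms] cocycle_alpha[OF st] rho_def)
  also have "\<dots> = a * \<alpha> s b * \<xi> s t * \<alpha> (m s t) c * \<xi> (m s t) u"
    using xi_nonzero[OF st] by (simp add: mult.assoc) (simp add: mult.assoc[symmetric])
  finally show ?thesis by simp
qed

lemma mul_mul_left_eq_sum:
  assumes v: "v \<noteq> th"
  shows "mul (mul x y) z v = (\<Sum>s\<in>UNIV. \<Sum>t\<in>UNIV. \<Sum>u\<in>UNIV. if m (m s t) u = v then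
           x s * \<alpha> s (y t) * \<xi> s t * \<alpha> (m s t) (z u) * \<xi> (m s t) u else 0)"
proof -
  let ?F = "\<lambda>s t u. x s * \<alpha> s (y t) * \<xi> s t * \<alpha> (m s t) (z u) * \<xi> (m s t) u"
  have inner: "(if m w u = v then mul x y w * \<alpha> w (z u) * \<xi> w u else 0)
      = (if m w u = v then \<Sum>s\<in>UNIV. \<Sum>t\<in>UNIV. if m s t = w then ?F s t u else 0 else 0)" for w u
  proof (cases "m w u = v")
    case True
    then have "w \<noteq> th" using v by auto
    then show ?thesis
      using True by (auto simp: mul_eq_sum sum_distrib_right intro!: sum.cong)
  qed simp
  have "mul (mul x y) z v = (\<Sum>u\<in>UNIV. \<Sum>w\<in>UNIV. if m w u = v then mul x y w * \<alpha> w (z u) * \<xi> w u else 0)"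
    unfolding mul_eq_sum[OF v] by (rule sum.swap)
  also have "\<dots> = (\<Sum>u\<in>UNIV. \<Sum>s\<in>UNIV. \<Sum>t\<in>UNIV. if m (m s t) u = v then ?F s t u else 0)"
    by (simp only: inner sum_over_fibres[OF finite_UNIV_semigroup])
  also have "\<dots> = (\<Sum>s\<in>UNIV. \<Sum>t\<in>UNIV. \<Sum>u\<in>UNIV. if m (m s t) u = v then ?F s t u else 0)"
    by (rule trans[OF sum.swap], rule sum.cong[OF refl], rule sum.swap)
  finally show ?thesis .
qed

lemma mul_mul_right_eq_sum:
  assumes v: "v \<noteq> th"
  shows "mul x (mul y z) v = (\<Sum>s\<in>UNIV. \<Sum>t\<in>UNIV. \<Sum>u\<in>UNIV. if m s (m t u) = v then
           x s * \<alpha> s (y t * \<alpha> t (z u) * \<xi> t u) * \<xi> s (m t u) else 0)"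
proof -
  let ?G = "\<lambda>s t u. x s * \<alpha> s (y t * \<alpha> t (z u) * \<xi> t u) * \<xi> s (m t u)"
  have inner: "(if m s w = v then x s * \<alpha> s (mul y z w) * \<xi> s w else 0)
      = (if m s w = v then \<Sum>t\<in>UNIV. \<Sum>u\<in>UNIV. if m t u = w then ?G s t u else 0 else 0)" for s w
  proof (cases "m s w = v")
    case True
    then have w: "w \<noteq> th" and s: "s \<noteq> th" using v by auto
    have A: "autD (\<alpha> s)" using s by (rule autD_alpha)
    have "x s * \<alpha> s (mul y z w) * \<xi> s w
        = (\<Sum>t\<in>UNIV. \<Sum>u\<in>UNIV. x s * \<alpha> s (if m t u = w then y t * \<alpha> t (z u) * \<xi> t u else 0) * \<xi> s w)"
      by (simp add: mul_eq_sum[OF w] autD_sum[OF A] sum_distrib_left sum_distrib_right)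
    also have "\<dots> = (\<Sum>t\<in>UNIV. \<Sum>u\<in>UNIV. if m t u = w then ?G s t u else 0)"
      by (intro sum.cong refl) (auto simp: autD_zero[OF A])
    finally show ?thesis using True by simp
  qed simp
  have "mul x (mul y z) v = (\<Sum>s\<in>UNIV. \<Sum>w\<in>UNIV. if m s w = v then x s * \<alpha> s (mul y z w) * \<xi> s w else 0)"
    by (rule mul_eq_sum[OF v])
  also have "\<dots> = (\<Sum>s\<in>UNIV. \<Sum>w\<in>UNIV. if m s w = v then \<Sum>t\<in>UNIV. \<Sum>u\<in>UNIV. if m t u = w then ?G s t u else 0 else 0)"
    by (simp only: inner)
  also have "\<dots> = (\<Sum>s\<in>UNIV. \<Sum>t\<in>UNIV. \<Sum>u\<in>UNIV. if m s (m t u) = v then ?G s t u else 0)"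
    by (rule sum.cong[OF refl], rule sum_over_fibres[OF finite_UNIV_semigroup])
  finally show ?thesis .
qed

lemma mul_assoc: "mul (mul x y) z = mul x (mul y z)"
proof
  fix v
  show "mul (mul x y) z v = mul x (mul y z) v"
  proof (cases "v = th")
    case False
    then show ?thesis
      by (simp add: mul_mul_left_eq_sum mul_mul_right_eq_sum assoc cocycle_triple cong: if_cong)
  qed simp
qed

lemma mul_diag_left: "mul (diag E \<epsilon>) x u = (if u = th then 0 else \<epsilon> (lft u) * x u)"
proof (cases "u = th")
  case False
  have "(if m s t = u then diag E \<epsilon> s * \<alpha> s (x t) * \<xi> s t else 0)
      = (if t = u then if s = lft u then \<epsilon> (lft u) * x u else 0 else 0)" for s t
    using False lft_in_E[OF False]
    by (cases "s \<in> E") (auto simp: diag_def E_mult_left_eq xi_lft)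
  then show ?thesis
    using False by (simp add: mul_eq_sum)
qed simp

lemma mul_diag_right: "mul x (diag E \<epsilon>) u = (if u = th then 0 else x u * \<alpha> u (\<epsilon> (rgt u)))"
proof (cases "u = th")
  case False
  have "(if m s t = u then x s * \<alpha> s (diag E \<epsilon> t) * \<xi> s t else 0)
      = (if t = rgt u then if s = u then x u * \<alpha> u (\<epsilon> (rgt u)) else 0 else 0)" for s t
  proof (cases "t \<in> E")
    case False
    then show ?thesis
      using \<open>u \<noteq> th\<close> rgt_in_E autD_zero[OF autD_alpha, of s] mult_nonzero_D[of s t]
      by (auto simp: diag_def)
  qed (use False in \<open>auto simp: diag_def E_mult_right_eq xi_rgt\<close>)
  then show ?thesis
    using False by (simp add: mul_eq_sum)
qed simp

lemma mul_diag_diag: "mul (diag E \<epsilon>) (diag E \<epsilon>') = diag E (\<lambda>s. \<epsilon> s * \<epsilon>' s)"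
  by (rule ext, subst mul_diag_left) (auto simp: diag_def)

lemma diag_cong: "(\<And>e. e \<in> E \<Longrightarrow> \<epsilon> e = \<epsilon>' e) \<Longrightarrow> diag E \<epsilon> = diag E \<epsilon>'"
  by (auto simp: diag_def)

lemma diag_zero_point [simp]: "diag E \<epsilon> th = 0"
  by (simp add: diag_def)

lemma diag_in_Rcarrier [simp]: "diag E \<epsilon> \<in> Rcarrier th"
  by (simp add: Rcarrier_def)

lemma mul_diag_one_left: "x th = 0 \<Longrightarrow> mul (diag E (\<lambda>_. 1)) x = x"
  by (rule ext) (auto simp: mul_diag_left)

lemma mul_diag_one_right: "x th = 0 \<Longrightarrow> mul x (diag E (\<lambda>_. 1)) = x"
  by (rule ext) (auto simp: mul_diag_right autD_one[OF autD_alpha])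

lemma Rone_eq: "Rone m th \<alpha> \<xi> = diag E (\<lambda>_. 1)"
  unfolding Rone_def
proof (rule the_equality)
  fix u assume "u \<in> Rcarrier th \<and> (\<forall>x\<in>Rcarrier th. mul u x = x \<and> mul x u = x)"
  then have "mul u (diag E (\<lambda>_. 1)) = diag E (\<lambda>_. 1)" and "u th = 0"
    by (auto simp: Rcarrier_def)
  then show "u = diag E (\<lambda>_. 1)" by (simp add: mul_diag_one_right)
qed (simp add: Rcarrier_def mul_diag_one_left mul_diag_one_right)

lemma carrier_RR [simp]: "carrier RR = Rcarrier th"
  and mult_RR [simp]: "x \<otimes>\<^bsub>RR\<^esub> y = mul x y"
  and one_RR [simp]: "\<one>\<^bsub>RR\<^esub> = diag E (\<lambda>_. 1)"
  and add_RR [simp]: "x \<oplus>\<^bsub>RR\<^esub> y = (\<lambda>s. x s + y s)"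
  and zero_RR [simp]: "\<zero>\<^bsub>RR\<^esub> = (\<lambda>_. 0)"
  by (simp_all add: Rring_def Rone_eq)

lemma mul_add_left: "mul (\<lambda>s. x s + y s) z = (\<lambda>s. mul x z s + mul y z s)"
proof
  fix u
  have "(if m s t = u then (x s + y s) * \<alpha> s (z t) * \<xi> s t else 0)
      = (if m s t = u then x s * \<alpha> s (z t) * \<xi> s t else 0) + (if m s t = u then y s * \<alpha> s (z t) * \<xi> s t else 0)"
    for s t
    by (simp add: distrib_right)
  then show "mul (\<lambda>s. x s + y s) z u = mul x z u + mul y z u"
    by (cases "u = th") (simp_all add: mul_eq_sum sum.distrib)
qed

lemma mul_add_right: "mul z (\<lambda>s. x s + y s) = (\<lambda>s. mul z x s + mul z y s)"
proof
  fix u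
  have "(if m s t = u then z s * \<alpha> s (x t + y t) * \<xi> s t else 0)
      = (if m s t = u then z s * \<alpha> s (x t) * \<xi> s t else 0) + (if m s t = u then z s * \<alpha> s (y t) * \<xi> s t else 0)"
    if "u \<noteq> th" for s t
    using that mult_nonzero_D[of s t]
    by (cases "m s t = u") (auto simp: autD_add[OF autD_alpha] distrib_left distrib_right)
  then show "mul z (\<lambda>s. x s + y s) u = mul z x u + mul z y u"
    by (cases "u = th") (simp_all add: mul_eq_sum sum.distrib)
qed

lemma ring_RR: "ring RR"
proof (rule ringI)
  show "abelian_group RR"
  proof (rule abelian_groupI)
    fix x assume "x \<in> carrier RR"
    then show "\<exists>y\<in>carrier RR. y \<oplus>\<^bsub>RR\<^esub> x = \<zero>\<^bsub>RR\<^esub>"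
      by (intro bexI[of _ "\<lambda>s. - x s"]) (auto simp: Rcarrier_def)
  qed (auto simp: Rcarrier_def add.assoc add.commute)
  show "monoid RR"
    by (rule monoidI) (auto simp: Rcarrier_def mul_assoc mul_diag_one_left mul_diag_one_right)
qed (simp_all add: mul_add_left mul_add_right)

lemma diag_Units:
  assumes "\<epsilon> \<in> nonzero_on E"
  shows "diag E \<epsilon> \<in> Units RR" and "inv\<^bsub>RR\<^esub> (diag E \<epsilon>) = diag E (\<lambda>s. inverse (\<epsilon> s))"
proof -
  interpret R: ring RR by (rule ring_RR)
  have 1: "mul (diag E \<epsilon>) (diag E (\<lambda>s. inverse (\<epsilon> s))) = diag E (\<lambda>_. 1)"
   and 2: "mul (diag E (\<lambda>s. inverse (\<epsilon> s))) (diag E \<epsilon>) = diag E (\<lambda>_. 1)"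
    unfolding mul_diag_diag using assms by (auto simp: nonzero_on_def intro: diag_cong)
  then show "diag E \<epsilon> \<in> Units RR"
    unfolding Units_def by (auto intro!: bexI[of _ "diag E (\<lambda>s. inverse (\<epsilon> s))"])
  show "inv\<^bsub>RR\<^esub> (diag E \<epsilon>) = diag E (\<lambda>s. inverse (\<epsilon> s))"
    using 1 2 by (intro R.inv_unique'[symmetric]) auto
qed

section \<open>Cocycles, coboundaries and the automorphisms \<open>\<sigma>\<close>\<close>

abbreviation "Zmult \<equiv> monoid.mult (Z1grp m th E \<alpha> \<xi>)"
abbreviation sg :: "('s \<Rightarrow> 'd \<Rightarrow> 'd) \<times> ('s \<Rightarrow> 'd) \<Rightarrow> ('s \<Rightarrow> 'd) \<Rightarrow> 's \<Rightarrow> 'd"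
  where "sg z \<equiv> sigma m th E (fst z) (snd z)"

lemma Zmult_eq:
  "Zmult a b = (\<lambda>e. fst a e \<circ> fst b e, \<lambda>s. if s = th then 1 else fst a (lft s) (snd b s) * snd a s)"
  by (simp add: Z1grp_def case_prod_beta)

lemma cochain_pairsD:
  assumes "z \<in> cochain_pairs th E"
  shows "e \<in> E \<Longrightarrow> autD (fst z e)" and "e \<notin> E \<Longrightarrow> fst z e = id"
    and "s \<noteq> th \<Longrightarrow> snd z s \<noteq> 0" and "snd z th = 1"
  using assms by (auto simp: cochain_pairs_def)

lemma autD_fst_lft: "z \<in> cochain_pairs th E \<Longrightarrow> s \<noteq> th \<Longrightarrow> autD (fst z (lft s))"
  by (rule cochain_pairsD(1)[OF _ lft_in_E])

lemma Zmult_in_cochain_pairs: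
  assumes a: "a \<in> cochain_pairs th E" and b: "b \<in> cochain_pairs th E"
  shows "Zmult a b \<in> cochain_pairs th E"
  using cochain_pairsD[OF a] cochain_pairsD[OF b] autD_fst_lft[OF a]
  by (auto simp: cochain_pairs_def Zmult_eq autD_comp autD_eq_0_iff)

lemma Zmult_assoc: "a \<in> cochain_pairs th E \<Longrightarrow> Zmult (Zmult a b) c = Zmult a (Zmult b c)"
  by (simp add: Zmult_eq fun_eq_iff autD_mult[OF autD_fst_lft] mult.assoc)

lemma Z1set_subset: "Z1set m th E \<alpha> \<xi> \<subseteq> cochain_pairs th E"
  by (auto simp: Z1set_def cochain_pairs_def)

lemma Z1set_alpha:
  assumes z: "z \<in> Z1set m th E \<alpha> \<xi>" and s: "s \<noteq> th"
  shows "fst z (lft s) (\<alpha> s d) = snd z s * \<alpha> s (fst z (rgt s) d) * inverse (snd z s)"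
proof -
  have "fst z (lft s) \<circ> \<alpha> s \<circ> inv_into UNIV (fst z (rgt s)) = rho (snd z s) \<circ> \<alpha> s"
    using z s by (auto simp: Z1set_def)
  then have "fst z (lft s) (\<alpha> s (inv_into UNIV (fst z (rgt s)) (fst z (rgt s) d)))
      = rho (snd z s) (\<alpha> s (fst z (rgt s) d))"
    by (metis comp_apply)
  then show ?thesis
    using autD_inv_into_apply[OF cochain_pairsD(1)[OF subsetD[OF Z1set_subset z] rgt_in_E[OF s]]]
    by (simp add: rho_def)
qed

lemma Z1set_xi:
  "z \<in> Z1set m th E \<alpha> \<xi> \<Longrightarrow> m s t \<noteq> th \<Longrightarrow>
     fst z (lft s) (\<xi> s t) = snd z s * \<alpha> s (snd z t) * \<xi> s t * inverse (snd z (m s t))"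
  by (auto simp: Z1set_def)

lemma Z1set_snd_E:
  assumes z: "z \<in> Z1set m th E \<alpha> \<xi>" and e: "e \<in> E"
  shows "snd z e = 1"
proof -
  have zc: "z \<in> cochain_pairs th E" using z Z1set_subset by blast
  have "1 = snd z e * snd z e * inverse (snd z e)"
    using Z1set_xi[OF z, of e e] e E_nonzero[OF e] idem xi_E autD_one[OF cochain_pairsD(1)[OF zc e]] by simp
  then show ?thesis
    using cochain_pairsD(3)[OF zc E_nonzero[OF e]] by (simp add: mult.assoc)
qed

lemma sigma_apply:
  "x \<in> Rcarrier th \<Longrightarrow> sigma m th E \<mu> \<eta> x = (\<lambda>s. if s = th then 0 else \<mu> (lft s) (x s) * \<eta> s)"
  by (simp add: sigma_def)

lemma sigma_in_Rcarrier: "x \<in> Rcarrier th \<Longrightarrow> sigma m th E \<mu> \<eta> x \<in> Rcarrier th"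
  by (simp add: sigma_apply Rcarrier_def)

lemma sigma_Zmult:
  assumes a: "a \<in> cochain_pairs th E"
  shows "sg (Zmult a b) = compose (carrier RR) (sg a) (sg b)"
proof
  fix x
  show "sg (Zmult a b) x = compose (carrier RR) (sg a) (sg b) x"
    using sigma_in_Rcarrier[of x "fst b" "snd b"]
    by (cases "x \<in> Rcarrier th")
       (auto simp: compose_def sigma_apply sigma_def Zmult_eq autD_mult[OF autD_fst_lft[OF a]] mult.assoc)
qed

text \<open>\<open>\<sigma>\<close> determines the pair: evaluate it on the basis elements \<open>d s\<close>.\<close>

lemma sigma_eq_imp_eq:
  assumes z: "z \<in> cochain_pairs th E" and z': "z' \<in> cochain_pairs th E" and eq: "sg z = sg z'"
  shows "z = z'"
proof -
  have pt: "fst z (lft s) d * snd z s = fst z' (lft s) d * snd z' s" if s: "s \<noteq> th" for s d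
  proof -
    have "(\<lambda>u. if u = s then d else 0) \<in> Rcarrier th" using s by (simp add: Rcarrier_def)
    then show ?thesis using fun_cong[OF eq, of "\<lambda>u. if u = s then d else 0"] s
      by (auto simp: sigma_apply dest: fun_cong[of _ _ s])
  qed
  have snd_eq: "snd z s = snd z' s" for s
    using pt[of s 1] autD_one[OF autD_fst_lft[OF z]] autD_one[OF autD_fst_lft[OF z']]
      cochain_pairsD(4)[OF z] cochain_pairsD(4)[OF z'] by (cases "s = th") auto
  have "fst z e = fst z' e" for e
    using pt[of e] snd_eq[of e] cochain_pairsD(3)[OF z'] cochain_pairsD(2)[OF z] cochain_pairsD(2)[OF z']
    by (cases "e \<in> E") (auto simp: fun_eq_iff E_nonzero)
  then show ?thesis using snd_eq by (simp add: prod_eq_iff fun_eq_iff)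
qed

definition coboundary :: "('s \<Rightarrow> 'd) \<Rightarrow> ('s \<Rightarrow> 'd \<Rightarrow> 'd) \<times> ('s \<Rightarrow> 'd)" where
  "coboundary \<epsilon> = (\<lambda>e. if e \<in> E then rho (\<epsilon> e) else id,
                    \<lambda>s. if s = th then 1 else \<epsilon> (lft s) * \<alpha> s (inverse (\<epsilon> (rgt s))))"

lemma fst_coboundary: "e \<in> E \<Longrightarrow> fst (coboundary \<epsilon>) e = rho (\<epsilon> e)"
  and snd_coboundary: "s \<noteq> th \<Longrightarrow> snd (coboundary \<epsilon>) s = \<epsilon> (lft s) * \<alpha> s (inverse (\<epsilon> (rgt s)))"
  by (simp_all add: coboundary_def)

lemma coboundary_in_cochain_pairs: "\<epsilon> \<in> nonzero_on E \<Longrightarrow> coboundary \<epsilon> \<in> cochain_pairs th E"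
  by (auto simp: cochain_pairs_def coboundary_def nonzero_on_def autD_rho lft_in_E rgt_in_E
      autD_eq_0_iff[OF autD_alpha])

lemma coboundary_alpha:
  assumes \<epsilon>: "\<epsilon> \<in> nonzero_on E" and s: "s \<noteq> th"
  shows "fst (coboundary \<epsilon>) (lft s) \<circ> \<alpha> s \<circ> inv_into UNIV (fst (coboundary \<epsilon>) (rgt s))
       = rho (snd (coboundary \<epsilon>) s) \<circ> \<alpha> s"
proof
  fix d
  let ?a = "\<epsilon> (lft s)" and ?b = "\<epsilon> (rgt s)"
  have a: "?a \<noteq> 0" and b: "?b \<noteq> 0" using \<epsilon> lft_in_E[OF s] rgt_in_E[OF s] by (auto simp: nonzero_on_def)
  have A: "autD (\<alpha> s)" by (rule autD_alpha[OF s])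
  have b': "\<alpha> s (inverse ?b) \<noteq> 0" using b by (simp add: autD_eq_0_iff[OF A])
  have "inv_into UNIV (fst (coboundary \<epsilon>) (rgt s)) = rho (inverse ?b)"
    using rgt_in_E[OF s] b by (simp add: fst_coboundary inv_into_rho)
  then show "(fst (coboundary \<epsilon>) (lft s) \<circ> \<alpha> s \<circ> inv_into UNIV (fst (coboundary \<epsilon>) (rgt s))) d
      = (rho (snd (coboundary \<epsilon>) s) \<circ> \<alpha> s) d"
    using s a b b' lft_in_E[OF s]
    by (simp add: fst_coboundary snd_coboundary rho_def autD_mult[OF A] autD_inverse[OF A]
        nonzero_inverse_mult_distrib mult.assoc)
qed

lemma coboundary_xi:
  assumes \<epsilon>: "\<epsilon> \<in> nonzero_on E" and st: "m s t \<noteq> th"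
  shows "fst (coboundary \<epsilon>) (lft s) (\<xi> s t)
       = snd (coboundary \<epsilon>) s * \<alpha> s (snd (coboundary \<epsilon>) t) * \<xi> s t * inverse (snd (coboundary \<epsilon>) (m s t))"
proof -
  have s: "s \<noteq> th" and t: "t \<noteq> th" using st by auto
  let ?a = "\<epsilon> (lft s)" and ?b = "\<epsilon> (rgt s)" and ?c = "\<epsilon> (rgt t)" and ?x = "\<xi> s t"
  have a: "?a \<noteq> 0" and b: "?b \<noteq> 0" and c: "?c \<noteq> 0"
    using \<epsilon> lft_in_E[OF s] rgt_in_E[OF s] rgt_in_E[OF t] by (auto simp: nonzero_on_def)
  have x: "?x \<noteq> 0" by (rule xi_nonzero[OF st])
  have A: "autD (\<alpha> s)" by (rule autD_alpha[OF s])
  have y: "\<alpha> (m s t) (inverse ?c) \<noteq> 0" using c by (simp add: autD_eq_0_iff[OF autD_alpha[OF st]])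
  have "snd (coboundary \<epsilon>) s * \<alpha> s (snd (coboundary \<epsilon>) t)
      = ?a * (\<alpha> s (inverse ?b) * \<alpha> s ?b) * \<alpha> s (\<alpha> t (inverse ?c))"
    using s t rgt_eq_lft_if_mult_nonzero[OF st] by (simp add: snd_coboundary autD_mult[OF A] mult.assoc)
  also have "\<dots> = ?a * (?x * \<alpha> (m s t) (inverse ?c) * inverse ?x)"
    using b by (simp add: cocycle_alpha[OF st] rho_def autD_one[OF A] flip: autD_mult[OF A])
  finally have "snd (coboundary \<epsilon>) s * \<alpha> s (snd (coboundary \<epsilon>) t) * ?x * inverse (snd (coboundary \<epsilon>) (m s t))
      = ?a * (?x * \<alpha> (m s t) (inverse ?c) * inverse ?x) * ?x * inverse (?a * \<alpha> (m s t) (inverse ?c))"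
    using st by (simp add: snd_coboundary lft_mult rgt_mult)
  also have "\<dots> = ?a * ?x * inverse ?a"
    using a x y by (simp add: nonzero_inverse_mult_distrib mult.assoc mult_inverse_cancel_left)
  finally show ?thesis
    using lft_in_E[OF s] by (simp add: fst_coboundary rho_def)
qed

lemma coboundary_in_Z1set: "\<epsilon> \<in> nonzero_on E \<Longrightarrow> coboundary \<epsilon> \<in> Z1set m th E \<alpha> \<xi>"
  using coboundary_in_cochain_pairs[of \<epsilon>] coboundary_alpha[of \<epsilon>] coboundary_xi[of \<epsilon>]
  unfolding Z1set_def cochain_pairs_def by (auto simp: case_prod_beta)

lemma B1set_eq_image: "B1set m th E \<alpha> \<xi> = coboundary ` nonzero_on E"
proof (intro equalityI subsetI)
  fix z assume z: "z \<in> B1set m th E \<alpha> \<xi>"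
  then have "\<exists>\<epsilon>. (\<forall>e\<in>E. \<epsilon> e \<noteq> 0 \<and> fst z e = rho (\<epsilon> e)) \<and>
      (\<forall>s. s \<noteq> th \<longrightarrow> snd z s = \<epsilon> (lft s) * \<alpha> s (inverse (\<epsilon> (rgt s))))"
    by (auto simp: B1set_def)
  then obtain \<epsilon> where \<epsilon>: "\<forall>e\<in>E. \<epsilon> e \<noteq> 0 \<and> fst z e = rho (\<epsilon> e)"
    and snd: "\<forall>s. s \<noteq> th \<longrightarrow> snd z s = \<epsilon> (lft s) * \<alpha> s (inverse (\<epsilon> (rgt s)))"
    by blast
  have zc: "z \<in> cochain_pairs th E" using z Z1set_subset by (auto simp: B1set_def)
  have "z = coboundary \<epsilon>"
    using \<epsilon> snd cochain_pairsD(2,4)[OF zc] by (auto simp: coboundary_def prod_eq_iff fun_eq_iff)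
  moreover have "\<epsilon> \<in> nonzero_on E" using \<epsilon> by (simp add: nonzero_on_def)
  ultimately show "z \<in> coboundary ` nonzero_on E" by blast
next
  fix z assume "z \<in> coboundary ` nonzero_on E"
  then obtain \<epsilon> where \<epsilon>: "\<epsilon> \<in> nonzero_on E" and z: "z = coboundary \<epsilon>" by auto
  show "z \<in> B1set m th E \<alpha> \<xi>"
    using coboundary_in_Z1set[OF \<epsilon>] \<epsilon> unfolding B1set_def z
    by (auto simp: nonzero_on_def fst_coboundary snd_coboundary case_prod_beta intro!: exI[of _ \<epsilon>])
qed

lemma coboundary_Zmult:
  assumes \<epsilon>: "\<epsilon> \<in> nonzero_on E" and \<epsilon>': "\<epsilon>' \<in> nonzero_on E"
  shows "Zmult (coboundary \<epsilon>) (coboundary \<epsilon>') = coboundary (\<lambda>e. \<epsilon> e * \<epsilon>' e)"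
proof -
  have nz: "e \<in> E \<Longrightarrow> \<epsilon> e \<noteq> 0" "e \<in> E \<Longrightarrow> \<epsilon>' e \<noteq> 0" for e
    using \<epsilon> \<epsilon>' by (auto simp: nonzero_on_def)
  show ?thesis
    using nz[OF lft_in_E] nz[OF rgt_in_E] lft_in_E rgt_in_E
    by (auto simp: Zmult_eq coboundary_def fun_eq_iff rho_rho nz rho_def nonzero_inverse_mult_distrib
        autD_mult[OF autD_alpha] mult.assoc inverse_mult_cancel_left)
qed

lemma coboundary_cong: "(\<And>e. e \<in> E \<Longrightarrow> \<epsilon> e = \<epsilon>' e) \<Longrightarrow> coboundary \<epsilon> = coboundary \<epsilon>'"
  by (auto simp: coboundary_def fun_eq_iff lft_in_E rgt_in_E)

lemma coboundary_one_Zmult: "z \<in> cochain_pairs th E \<Longrightarrow> Zmult (coboundary (\<lambda>_. 1)) z = z"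
  using cochain_pairsD(2,4)[of z]
  by (auto simp: Zmult_eq coboundary_def rho_1 fun_eq_iff prod_eq_iff autD_one[OF autD_alpha])

lemma sigma_coboundary:
  assumes \<epsilon>: "\<epsilon> \<in> nonzero_on E"
  shows "sg (coboundary \<epsilon>) = inn RR (diag E \<epsilon>)"
proof
  fix x
  show "sg (coboundary \<epsilon>) x = inn RR (diag E \<epsilon>) x"
  proof (cases "x \<in> Rcarrier th")
    case True
    have "inn RR (diag E \<epsilon>) x = mul (mul (diag E \<epsilon>) x) (diag E (\<lambda>s. inverse (\<epsilon> s)))"
      using True diag_Units[OF \<epsilon>] by (simp add: inn_def)
    also have "\<dots> = sg (coboundary \<epsilon>) x"
      using True \<epsilon> lft_in_E rgt_in_E
      by (auto simp: mul_diag_left mul_diag_right sigma_apply coboundary_def rho_def mult.assoc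
          nonzero_on_def fun_eq_iff inverse_mult_cancel_left)
    finally show ?thesis by simp
  qed (simp add: sigma_def inn_def)
qed

abbreviation "B1 \<equiv> B1set m th E \<alpha> \<xi>"
abbreviation "Z1 \<equiv> Z1set m th E \<alpha> \<xi>"
abbreviation "ZG \<equiv> Z1grp m th E \<alpha> \<xi>"

lemma rcoset_B1: "B1 #>\<^bsub>ZG\<^esub> a = (\<lambda>\<epsilon>. Zmult (coboundary \<epsilon>) a) ` nonzero_on E"
  unfolding r_coset_def B1set_eq_image by auto

lemma rcoset_B1_self: "a \<in> cochain_pairs th E \<Longrightarrow> a \<in> B1 #>\<^bsub>ZG\<^esub> a"
  unfolding rcoset_B1 by (rule image_eqI[of _ _ "\<lambda>_. 1"]) (simp_all add: coboundary_one_Zmult nonzero_on_one)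

lemma rcoset_B1_Zmult_coboundary:
  assumes \<epsilon>: "\<epsilon> \<in> nonzero_on E"
  shows "B1 #>\<^bsub>ZG\<^esub> Zmult (coboundary \<epsilon>) a = B1 #>\<^bsub>ZG\<^esub> a"
proof -
  have eq: "Zmult (coboundary \<epsilon>') (Zmult (coboundary \<epsilon>) a) = Zmult (coboundary (\<lambda>e. \<epsilon>' e * \<epsilon> e)) a"
    if \<epsilon>': "\<epsilon>' \<in> nonzero_on E" for \<epsilon>'
    by (simp add: Zmult_assoc[OF coboundary_in_cochain_pairs[OF \<epsilon>'], symmetric] coboundary_Zmult[OF \<epsilon>' \<epsilon>])
  show ?thesis
    unfolding rcoset_B1
  proof (intro equalityI subsetI)
    fix z assume "z \<in> (\<lambda>\<epsilon>'. Zmult (coboundary \<epsilon>') (Zmult (coboundary \<epsilon>) a)) ` nonzero_on E"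
    then obtain \<epsilon>' where \<epsilon>': "\<epsilon>' \<in> nonzero_on E" and z: "z = Zmult (coboundary (\<lambda>e. \<epsilon>' e * \<epsilon> e)) a"
      using eq by auto
    show "z \<in> (\<lambda>\<epsilon>. Zmult (coboundary \<epsilon>) a) ` nonzero_on E"
      unfolding z by (rule imageI[OF nonzero_on_mult[OF \<epsilon>' \<epsilon>]])
  next
    fix z assume "z \<in> (\<lambda>\<epsilon>. Zmult (coboundary \<epsilon>) a) ` nonzero_on E"
    then obtain \<epsilon>'' where \<epsilon>'': "\<epsilon>'' \<in> nonzero_on E" and z: "z = Zmult (coboundary \<epsilon>'') a" by auto
    let ?\<epsilon>' = "\<lambda>e. \<epsilon>'' e * inverse (\<epsilon> e)"
    have \<epsilon>': "?\<epsilon>' \<in> nonzero_on E" by (rule nonzero_on_mult[OF \<epsilon>'' nonzero_on_inverse[OF \<epsilon>]])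
    have "coboundary \<epsilon>'' = coboundary (\<lambda>e. ?\<epsilon>' e * \<epsilon> e)"
      using \<epsilon> by (intro coboundary_cong) (simp add: nonzero_on_def mult.assoc)
    then have "z = Zmult (coboundary ?\<epsilon>') (Zmult (coboundary \<epsilon>) a)" using z eq[OF \<epsilon>'] by simp
    then show "z \<in> (\<lambda>\<epsilon>'. Zmult (coboundary \<epsilon>') (Zmult (coboundary \<epsilon>) a)) ` nonzero_on E"
      using \<epsilon>' by blast
  qed
qed

lemma sigma_mult:
  assumes z: "z \<in> Z1" and x: "x \<in> Rcarrier th" and y: "y \<in> Rcarrier th"
  shows "sg z (mul x y) = mul (sg z x) (sg z y)"
proof
  fix u
  let ?\<mu> = "fst z" and ?\<eta> = "snd z"
  have zc: "z \<in> cochain_pairs th E" using z Z1set_subset by blast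
  show "sg z (mul x y) u = mul (sg z x) (sg z y) u"
  proof (cases "u = th")
    case u: False
    have A: "autD (?\<mu> (lft u))" by (rule autD_fst_lft[OF zc u])
    have summand: "?\<mu> (lft u) (if m s t = u then x s * \<alpha> s (y t) * \<xi> s t else 0) * ?\<eta> u
      = (if m s t = u then sg z x s * \<alpha> s (sg z y t) * \<xi> s t else 0)" for s t
    proof (cases "m s t = u")
      case True
      then have st: "m s t \<noteq> th" using u by simp
      then have s: "s \<noteq> th" and t: "t \<noteq> th" by auto
      have ls: "lft s = lft u" using lft_mult[OF st] True by simp
      have As: "autD (\<alpha> s)" by (rule autD_alpha[OF s])
      have "?\<eta> s \<noteq> 0" and "?\<eta> u \<noteq> 0" using cochain_pairsD(3)[OF zc] s u by auto
      then have "?\<mu> (lft u) (x s * \<alpha> s (y t) * \<xi> s t) * ?\<eta> u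
          = ?\<mu> (lft s) (x s) * ?\<eta> s * \<alpha> s (?\<mu> (rgt s) (y t)) * \<alpha> s (?\<eta> t) * \<xi> s t"
        using Z1set_alpha[OF z s] Z1set_xi[OF z st] ls True
        by (simp add: autD_mult[OF A] mult.assoc inverse_mult_cancel_left)
      also have "\<dots> = sg z x s * \<alpha> s (sg z y t) * \<xi> s t"
        using s t x y
        by (simp add: sigma_apply autD_mult[OF As] rgt_eq_lft_if_mult_nonzero[OF st] mult.assoc)
      finally show ?thesis using True by simp
    qed (simp add: autD_zero[OF A])
    have "sg z (mul x y) u = ?\<mu> (lft u) (mul x y u) * ?\<eta> u"
      using u by (simp add: sigma_apply Rcarrier_def)
    also have "\<dots> = (\<Sum>s\<in>UNIV. \<Sum>t\<in>UNIV. ?\<mu> (lft u) (if m s t = u then x s * \<alpha> s (y t) * \<xi> s t else 0) * ?\<eta> u)"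
      using u by (simp add: mul_eq_sum autD_sum[OF A] sum_distrib_right)
    also have "\<dots> = mul (sg z x) (sg z y) u"
      using u by (simp add: mul_eq_sum summand)
    finally show ?thesis .
  qed (simp add: sigma_apply Rcarrier_def)
qed

lemma sigma_ring_hom:
  assumes z: "z \<in> Z1"
  shows "sg z \<in> ring_hom RR RR"
proof (rule ring_hom_memI)
  have zc: "z \<in> cochain_pairs th E" using z Z1set_subset by blast
  fix x y assume x: "x \<in> carrier RR" and y: "y \<in> carrier RR"
  show "sg z (x \<otimes>\<^bsub>RR\<^esub> y) = sg z x \<otimes>\<^bsub>RR\<^esub> sg z y"
    using sigma_mult[OF z] x y by simp
  show "sg z (x \<oplus>\<^bsub>RR\<^esub> y) = sg z x \<oplus>\<^bsub>RR\<^esub> sg z y"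
    using x y by (auto simp: sigma_apply Rcarrier_def fun_eq_iff autD_add[OF autD_fst_lft[OF zc]] distrib_right)
next
  fix x :: "'s \<Rightarrow> 'd" assume "x \<in> carrier RR"
  then show "sg z x \<in> carrier RR" by (simp add: sigma_in_Rcarrier)
next
  have zc: "z \<in> cochain_pairs th E" using z Z1set_subset by blast
  show "sg z \<one>\<^bsub>RR\<^esub> = \<one>\<^bsub>RR\<^esub>"
    unfolding one_RR sigma_apply[OF diag_in_Rcarrier]
    using Z1set_snd_E[OF z] autD_one[OF cochain_pairsD(1)[OF zc]] autD_zero[OF autD_fst_lft[OF zc]]
    by (auto simp: diag_def fun_eq_iff)
qed

lemma sigma_Bij: "z \<in> cochain_pairs th E \<Longrightarrow> sg z \<in> Bij (carrier RR)"
proof -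
  assume z: "z \<in> cochain_pairs th E"
  let ?g = "\<lambda>y s. if s = th then 0 else inv_into UNIV (fst z (lft s)) (y s * inverse (snd z s))"
  have "bij_betw (sg z) (Rcarrier th) (Rcarrier th)"
  proof (rule bij_betwI[where g = ?g])
    show "?g \<in> Rcarrier th \<rightarrow> Rcarrier th" by (auto simp: Rcarrier_def)
    fix x :: "'s \<Rightarrow> 'd" assume "x \<in> Rcarrier th"
    then show "?g (sg z x) = x"
      using cochain_pairsD(3)[OF z] autD_inv_into_apply[OF autD_fst_lft[OF z]]
      by (auto simp: sigma_apply fun_eq_iff Rcarrier_def mult.assoc)
  next
    fix y :: "'s \<Rightarrow> 'd" assume "y \<in> Rcarrier th"
    moreover have "?g y \<in> Rcarrier th" by (simp add: Rcarrier_def)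
    ultimately show "sg z (?g y) = y"
      using cochain_pairsD(3)[OF z] autD_apply_inv_into[OF autD_fst_lft[OF z]]
      by (auto simp: sigma_apply fun_eq_iff Rcarrier_def mult.assoc)
  qed (auto simp: sigma_in_Rcarrier)
  then show ?thesis by (simp add: Bij_def sigma_def)
qed

lemma sigma_in_AutR: "z \<in> Z1 \<Longrightarrow> sg z \<in> carrier (AutR RR)"
  using sigma_Bij[of z] sigma_ring_hom[of z] Z1set_subset
  by (auto simp: AutR_def BijGroup_def ring_iso_def Bij_def)

definition delta :: "'s \<Rightarrow> 's \<Rightarrow> 'd" where
  "delta e = diag E (\<lambda>s. if s = e then 1 else 0)"

lemma delta_in_Rcarrier: "delta e \<in> Rcarrier th"
  by (simp add: delta_def)

lemma sigma_delta:
  assumes z: "z \<in> Z1" and e: "e \<in> E"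
  shows "sg z (delta e) = delta e"
proof
  have zc: "z \<in> cochain_pairs th E" using z Z1set_subset by blast
  fix u
  show "sg z (delta e) u = delta e u"
    unfolding sigma_apply[OF delta_in_Rcarrier]
    using Z1set_snd_E[OF z] autD_one[OF cochain_pairsD(1)[OF zc]] autD_zero[OF cochain_pairsD(1)[OF zc]]
      autD_zero[OF autD_fst_lft[OF zc]]
    by (cases "u \<in> E") (auto simp: delta_def diag_def)
qed

text \<open>The centraliser of the idempotents consists of diagonal elements, since
  \<open>e x f = x\<^sub>s s\<close> for the unique \<open>s \<in> e S f\<close>.\<close>

lemma Units_commuting_delta_diag:
  assumes r: "r \<in> Units RR" and comm: "\<And>e. e \<in> E \<Longrightarrow> mul r (delta e) = mul (delta e) r"
  shows "\<exists>\<epsilon>\<in>nonzero_on E. r = diag E \<epsilon>"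
proof -
  interpret R: ring RR by (rule ring_RR)
  have rc: "r th = 0" using r by (auto simp: Units_def Rcarrier_def)
  have off_diag: "r u = 0" if u: "u \<noteq> th" "u \<notin> E" for u
  proof -
    have "lft u \<noteq> rgt u" using in_E_if_lft_eq_rgt u by blast
    then show ?thesis
      using fun_cong[OF comm[OF rgt_in_E[OF u(1)]], of u] u autD_one[OF autD_alpha[OF u(1)]]
      by (simp add: delta_def mul_diag_left mul_diag_right)
  qed
  have r_diag: "r = diag E r"
  proof
    fix u show "r u = diag E r u"
      using off_diag[of u] rc by (cases "u = th") (auto simp: diag_def)
  qed
  have "r e \<noteq> 0" if e: "e \<in> E" for e
  proof
    assume "r e = 0"
    then have "mul (diag E r) (inv\<^bsub>RR\<^esub> r) e = 0"
      using e by (simp add: mul_diag_left E_nonzero)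
    moreover have "mul (diag E r) (inv\<^bsub>RR\<^esub> r) = diag E (\<lambda>_. 1)"
      using R.Units_r_inv[OF r] r_diag by simp
    ultimately show False using e by (simp add: diag_def)
  qed
  then show ?thesis using r_diag by (auto simp: nonzero_on_def)
qed

section \<open>The monomorphism \<open>\<Lambda>\<close>\<close>

abbreviation "Inn \<equiv> InnR RR"
abbreviation "Aut \<equiv> AutR RR"
abbreviation "\<Lambda> \<equiv> Lambda m th E \<alpha> \<xi>"

lemma sigma_Zmult_coboundary:
  "\<epsilon> \<in> nonzero_on E \<Longrightarrow> sg (Zmult (coboundary \<epsilon>) a) = compose (carrier RR) (inn RR (diag E \<epsilon>)) (sg a)"
  by (simp add: sigma_Zmult coboundary_in_cochain_pairs sigma_coboundary)

lemma rcoset_InnR_sigma_Zmult_coboundary: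
  assumes "\<epsilon> \<in> nonzero_on E" and "a \<in> cochain_pairs th E"
  shows "Inn #>\<^bsub>Aut\<^esub> sg (Zmult (coboundary \<epsilon>) a) = Inn #>\<^bsub>Aut\<^esub> sg a"
  using rcoset_InnR_conj_comp[OF ring_RR] sigma_Bij[OF assms(2)] diag_Units(1)[OF assms(1)]
  by (simp add: sigma_Zmult_coboundary[OF assms(1)])

text \<open>\<open>Lambda\<close> evaluates \<open>\<sigma>\<close> at a representative chosen by \<open>SOME\<close>; this rule reduces it to
  independence of the representative.\<close>

lemma Lambda_eqI:
  assumes "z \<in> Z" and "\<And>z. z \<in> Z \<Longrightarrow> Inn #>\<^bsub>Aut\<^esub> sg z = K"
  shows "\<Lambda> Z = K"
  unfolding Lambda_def Let_def using assms(2)[OF someI[of "\<lambda>z. z \<in> Z", OF assms(1)]] by simp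

lemma Lambda_rcoset: "a \<in> Z1 \<Longrightarrow> \<Lambda> (B1 #>\<^bsub>ZG\<^esub> a) = Inn #>\<^bsub>Aut\<^esub> sg a"
  using Z1set_subset
  by (intro Lambda_eqI[OF rcoset_B1_self]) (auto simp: rcoset_B1 rcoset_InnR_sigma_Zmult_coboundary)

lemma Lambda_mult:
  assumes a: "a \<in> Z1" and b: "b \<in> Z1"
  shows "\<Lambda> ((B1 #>\<^bsub>ZG\<^esub> a) <#>\<^bsub>ZG\<^esub> (B1 #>\<^bsub>ZG\<^esub> b)) = (Inn #>\<^bsub>Aut\<^esub> sg a) <#>\<^bsub>Aut\<^esub> (Inn #>\<^bsub>Aut\<^esub> sg b)"
proof (rule Lambda_eqI)
  interpret R: ring RR by (rule ring_RR)
  have ac: "a \<in> cochain_pairs th E" and bc: "b \<in> cochain_pairs th E" using a b Z1set_subset by auto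
  show "Zmult a b \<in> (B1 #>\<^bsub>ZG\<^esub> a) <#>\<^bsub>ZG\<^esub> (B1 #>\<^bsub>ZG\<^esub> b)"
    using rcoset_B1_self[OF ac] rcoset_B1_self[OF bc] unfolding set_mult_def by blast
  fix z assume "z \<in> (B1 #>\<^bsub>ZG\<^esub> a) <#>\<^bsub>ZG\<^esub> (B1 #>\<^bsub>ZG\<^esub> b)"
  then obtain \<epsilon> \<epsilon>' where \<epsilon>: "\<epsilon> \<in> nonzero_on E" and \<epsilon>': "\<epsilon>' \<in> nonzero_on E"
    and z: "z = Zmult (Zmult (coboundary \<epsilon>) a) (Zmult (coboundary \<epsilon>') b)"
    unfolding set_mult_def rcoset_B1 by blast
  let ?f = "sg a" and ?g = "sg b" and ?r = "diag E \<epsilon> \<otimes>\<^bsub>RR\<^esub> sg a (diag E \<epsilon>')"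
  have f: "?f \<in> Bij (carrier RR)" "?f \<in> ring_hom RR RR" and g: "?g \<in> Bij (carrier RR)"
    using sigma_Bij[OF ac] sigma_ring_hom[OF a] sigma_Bij[OF bc] by auto
  have r: "?r \<in> Units RR"
    by (rule R.Units_m_closed[OF diag_Units(1)[OF \<epsilon>] R.ring_hom_Units(1)[OF f(2) diag_Units(1)[OF \<epsilon>']]])
  have "sg z = compose (carrier RR) (sg (Zmult (coboundary \<epsilon>) a)) (sg (Zmult (coboundary \<epsilon>') b))"
    unfolding z by (rule sigma_Zmult[OF Zmult_in_cochain_pairs[OF coboundary_in_cochain_pairs[OF \<epsilon>] ac]])
  also have "\<dots> = compose (carrier RR) (inn RR ?r) (compose (carrier RR) ?f ?g)"
    unfolding sigma_Zmult_coboundary[OF \<epsilon>] sigma_Zmult_coboundary[OF \<epsilon>']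
    by (rule conj_comp_compose_conj_comp[OF ring_RR f g diag_Units(1)[OF \<epsilon>] diag_Units(1)[OF \<epsilon>']])
  finally have "sg z = compose (carrier RR) (inn RR ?r) (compose (carrier RR) ?f ?g)" .
  then show "Inn #>\<^bsub>Aut\<^esub> sg z = (Inn #>\<^bsub>Aut\<^esub> ?f) <#>\<^bsub>Aut\<^esub> (Inn #>\<^bsub>Aut\<^esub> ?g)"
    using rcoset_InnR_conj_comp[OF ring_RR compose_Bij[OF f(1) g] r] rcoset_InnR_compose[OF ring_RR f g]
    by simp
qed

lemma carrier_FactGroup_Z1: "carrier (ZG Mod B1) = (\<lambda>a. B1 #>\<^bsub>ZG\<^esub> a) ` Z1"
  by (auto simp: FactGroup_def RCOSETS_def Z1grp_def)

lemma Lambda_hom: "\<Lambda> \<in> hom (ZG Mod B1) (Aut Mod Inn)"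
proof (rule homI)
  fix x assume "x \<in> carrier (ZG Mod B1)"
  then obtain a where a: "a \<in> Z1" and x: "x = B1 #>\<^bsub>ZG\<^esub> a" unfolding carrier_FactGroup_Z1 by auto
  show "\<Lambda> x \<in> carrier (Aut Mod Inn)"
    using Lambda_rcoset[OF a] sigma_in_AutR[OF a] x by (auto simp: FactGroup_def RCOSETS_def)
next
  fix x y assume "x \<in> carrier (ZG Mod B1)" "y \<in> carrier (ZG Mod B1)"
  then obtain a b where a: "a \<in> Z1" and x: "x = B1 #>\<^bsub>ZG\<^esub> a" and b: "b \<in> Z1" and y: "y = B1 #>\<^bsub>ZG\<^esub> b"
    unfolding carrier_FactGroup_Z1 by auto
  show "\<Lambda> (x \<otimes>\<^bsub>ZG Mod B1\<^esub> y) = \<Lambda> x \<otimes>\<^bsub>Aut Mod Inn\<^esub> \<Lambda> y"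
    using Lambda_mult[OF a b] Lambda_rcoset[OF a] Lambda_rcoset[OF b] x y by (simp add: FactGroup_def)
qed

text \<open>If \<open>\<sigma>\<^sub>a\<close> and \<open>\<sigma>\<^sub>b\<close> differ by an inner automorphism, its unit fixes every idempotent
  and so is a diagonal unit \<open>\<epsilon>\<close>; then \<open>a\<close> and \<open>(coboundary \<epsilon>) b\<close> have the same \<open>\<sigma>\<close>.\<close>

lemma Lambda_inj: "inj_on \<Lambda> (carrier (ZG Mod B1))"
proof (rule inj_onI)
  interpret R: ring RR by (rule ring_RR)
  fix x y assume "x \<in> carrier (ZG Mod B1)" "y \<in> carrier (ZG Mod B1)" and eq: "\<Lambda> x = \<Lambda> y"
  then obtain a b where a: "a \<in> Z1" and x: "x = B1 #>\<^bsub>ZG\<^esub> a" and b: "b \<in> Z1" and y: "y = B1 #>\<^bsub>ZG\<^esub> b"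
    unfolding carrier_FactGroup_Z1 by auto
  have ac: "a \<in> cochain_pairs th E" and bc: "b \<in> cochain_pairs th E" using a b Z1set_subset by auto
  have "sg a \<in> Inn #>\<^bsub>Aut\<^esub> sg b"
    using rcoset_InnR_self[OF ring_RR sigma_Bij[OF ac]] eq Lambda_rcoset[OF a] Lambda_rcoset[OF b] x y by simp
  then obtain r where r: "r \<in> Units RR" and sa: "sg a = compose (carrier RR) (inn RR r) (sg b)"
    unfolding rcoset_InnR[OF ring_RR sigma_Bij[OF bc]] by auto
  have "inn RR r (delta e) = delta e" if e: "e \<in> E" for e
    using fun_cong[OF sa, of "delta e"] sigma_delta[OF a e] sigma_delta[OF b e] delta_in_Rcarrier[of e]
    by (simp add: compose_def)
  then have "mul r (delta e) = mul (delta e) r" if "e \<in> E" for e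
    using R.inn_fixed_commute[OF r, of "delta e"] that by (simp add: delta_in_Rcarrier)
  then obtain \<epsilon> where \<epsilon>: "\<epsilon> \<in> nonzero_on E" and rd: "r = diag E \<epsilon>"
    using Units_commuting_delta_diag[OF r] by blast
  have "a = Zmult (coboundary \<epsilon>) b"
    using sa rd sigma_Zmult_coboundary[OF \<epsilon>, of b]
    by (intro sigma_eq_imp_eq[OF ac] Zmult_in_cochain_pairs[OF coboundary_in_cochain_pairs[OF \<epsilon>] bc]) simp
  then show "x = y" using x y rcoset_B1_Zmult_coboundary[OF \<epsilon>] by simp
qed

end

theorem mainTheorem4:
  fixes m :: "'s \<Rightarrow> 's \<Rightarrow> 's" and th :: 's and E :: "'s set"
    and \<alpha> :: "'s \<Rightarrow> 'd::division_ring \<Rightarrow> 'd" and \<xi> :: "'s \<Rightarrow> 's \<Rightarrow> 'd"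
  assumes "sqfree_sg m th E"
    and "cocycle2 m th \<alpha> \<xi>"
    and "normal_cocycle E \<alpha> \<xi>"
  shows "(\<forall>z\<in>Z1set m th E \<alpha> \<xi>. \<forall>z'\<in>Z1set m th E \<alpha> \<xi>.
            B1set m th E \<alpha> \<xi> #>\<^bsub>Z1grp m th E \<alpha> \<xi>\<^esub> z = B1set m th E \<alpha> \<xi> #>\<^bsub>Z1grp m th E \<alpha> \<xi>\<^esub> z' \<longrightarrow>
            InnR (Rring m th \<alpha> \<xi>) #>\<^bsub>AutR (Rring m th \<alpha> \<xi>)\<^esub> sigma m th E (fst z) (snd z)
          = InnR (Rring m th \<alpha> \<xi>) #>\<^bsub>AutR (Rring m th \<alpha> \<xi>)\<^esub> sigma m th E (fst z') (snd z'))
       \<and> Lambda m th E \<alpha> \<xi> \<in> hom (Z1grp m th E \<alpha> \<xi> Mod B1set m th E \<alpha> \<xi>)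
                                (AutR (Rring m th \<alpha> \<xi>) Mod InnR (Rring m th \<alpha> \<xi>))
       \<and> inj_on (Lambda m th E \<alpha> \<xi>) (carrier (Z1grp m th E \<alpha> \<xi> Mod B1set m th E \<alpha> \<xi>))"
proof -
  interpret twisted_semigroup_ring m th E \<alpha> \<xi>
    using assms by (intro twisted_semigroup_ring.intro sqfree_semigroup.intro twisted_semigroup_ring_axioms.intro)
  have "Inn #>\<^bsub>Aut\<^esub> sg z = Inn #>\<^bsub>Aut\<^esub> sg z'" if "z \<in> Z1" "z' \<in> Z1" "B1 #>\<^bsub>ZG\<^esub> z = B1 #>\<^bsub>ZG\<^esub> z'" for z z'
    using Lambda_rcoset[OF that(1)] Lambda_rcoset[OF that(2)] that(3) by simp
  then show ?thesis
    using Lambda_hom Lambda_inj by blast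
qed

end
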